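(* Let $G$ be a finite group, $f:G\to X$ a function, and $\pi:G\to U(V)$, $\pi':G\to U(W)$ two finite-dimensional unitary representations with $I(V)=I(W)$. Then for every $t\ge1$, the optimal success probability of a $t$-query algorithm for the symmetric oracle problem $(G,V,f)$ equals that for $(G,W,f)$. That is, the optimal $t$-query success probability depends only on $I(V)$ and $f$.
   Context: For a representation $V$ of a finite group $G$ with character $\chi_V$, $I(V)$ denotes the set of irreducible characters $\chi$ of $G$ with $\langle\chi,\chi_V\rangle>0$ (i.e. appearing in $V$). A $t$-query (adaptive) algorithm for $(G,V,f)$, with $f:G\to X$, consists of $N\ge1$, a unit vector $\psi\in V\otimes\mathbb{C}^N$, unitaries $U_1,\dots,U_t$ on $V\otimes\mathbb{C}^N$ and a POVM $\{E_x\}_{x\in X}$; on hidden $a$ it produces $\psi_a=U_t(\pi(a)\otimes I)\cdots U_1(\pi(a)\otimes I)\psi$, and its success probability is $\frac1{|G|}\sum_{a}\langle\psi_a|E_{f(a)}|\psi_a\rangle$. The optimal success probability is the supremum over all such algorithms (with arbitrary $N$). *)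

theory Defs
  imports "Jordan_Normal_Form.Matrix" "HOL-Algebra.Group"
begin

definition adj :: "complex mat \<Rightarrow> complex mat" where
  "adj A = mat (dim_col A) (dim_row A) (\<lambda>(i,j). cnj (A $$ (j,i)))"

definition unitary_mat :: "nat \<Rightarrow> complex mat \<Rightarrow> bool" where
  "unitary_mat n U \<longleftrightarrow> U \<in> carrier_mat n n \<and> adj U * U = 1\<^sub>m n \<and> U * adj U = 1\<^sub>m n"

definition vinner :: "complex vec \<Rightarrow> complex vec \<Rightarrow> complex" where
  "vinner v w = (\<Sum>i<dim_vec v. cnj (v $ i) * w $ i)"

definition psd :: "nat \<Rightarrow> complex mat \<Rightarrow> bool" where
  "psd n E \<longleftrightarrow> E \<in> carrier_mat n n \<and>
     (\<forall>v\<in>carrier_vec n. Im (vinner v (E *\<^sub>v v)) = 0 \<and> Re (vinner v (E *\<^sub>v v)) \<ge> 0)"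

definition mtrace :: "complex mat \<Rightarrow> complex" where
  "mtrace A = (\<Sum>i<dim_row A. A $$ (i,i))"

text \<open>Kronecker product A \<otimes> I_N (matrix of an operator on V tensored with identity on C^N).\<close>
definition tensor_id :: "complex mat \<Rightarrow> nat \<Rightarrow> complex mat" where
  "tensor_id A N = mat (dim_row A * N) (dim_col A * N)
     (\<lambda>(i,j). if i mod N = j mod N then A $$ (i div N, j div N) else 0)"

definition rep :: "('g,'b) monoid_scheme \<Rightarrow> nat \<Rightarrow> ('g \<Rightarrow> complex mat) \<Rightarrow> bool" where
  "rep G d \<pi> \<longleftrightarrow> (\<forall>g\<in>carrier G. \<pi> g \<in> carrier_mat d d) \<and>
     (\<forall>g\<in>carrier G. \<forall>h\<in>carrier G. \<pi> (g \<otimes>\<^bsub>G\<^esub> h) = \<pi> g * \<pi> h) \<and>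
     \<pi> \<one>\<^bsub>G\<^esub> = 1\<^sub>m d"

definition unitary_rep :: "('g,'b) monoid_scheme \<Rightarrow> nat \<Rightarrow> ('g \<Rightarrow> complex mat) \<Rightarrow> bool" where
  "unitary_rep G d \<pi> \<longleftrightarrow> rep G d \<pi> \<and> (\<forall>g\<in>carrier G. unitary_mat d (\<pi> g))"

definition subspace_vec :: "nat \<Rightarrow> complex vec set \<Rightarrow> bool" where
  "subspace_vec d S \<longleftrightarrow> S \<subseteq> carrier_vec d \<and> 0\<^sub>v d \<in> S \<and>
     (\<forall>v\<in>S. \<forall>w\<in>S. v + w \<in> S) \<and> (\<forall>c. \<forall>v\<in>S. c \<cdot>\<^sub>v v \<in> S)"

definition irreducible_rep :: "('g,'b) monoid_scheme \<Rightarrow> nat \<Rightarrow> ('g \<Rightarrow> complex mat) \<Rightarrow> bool" where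
  "irreducible_rep G d \<pi> \<longleftrightarrow> rep G d \<pi> \<and> d > 0 \<and>
     (\<forall>S. subspace_vec d S \<and> (\<forall>g\<in>carrier G. \<forall>v\<in>S. \<pi> g *\<^sub>v v \<in> S)
          \<longrightarrow> S = {0\<^sub>v d} \<or> S = carrier_vec d)"

definition character :: "('g,'b) monoid_scheme \<Rightarrow> ('g \<Rightarrow> complex mat) \<Rightarrow> 'g \<Rightarrow> complex" where
  "character G \<pi> g = (if g \<in> carrier G then mtrace (\<pi> g) else 0)"

definition char_inner :: "('g,'b) monoid_scheme \<Rightarrow> ('g \<Rightarrow> complex) \<Rightarrow> ('g \<Rightarrow> complex) \<Rightarrow> complex" where
  "char_inner G \<chi> \<psi> = (\<Sum>g\<in>carrier G. \<chi> g * cnj (\<psi> g)) / of_nat (card (carrier G))"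

definition irr_chars :: "('g,'b) monoid_scheme \<Rightarrow> ('g \<Rightarrow> complex) set" where
  "irr_chars G = {\<chi>. \<exists>d \<pi>. irreducible_rep G d \<pi> \<and> \<chi> = character G \<pi>}"

text \<open>I(V): irreducible characters occurring in V (the inner product is a real number).\<close>
definition Irr_in :: "('g,'b) monoid_scheme \<Rightarrow> ('g \<Rightarrow> complex mat) \<Rightarrow> ('g \<Rightarrow> complex) set" where
  "Irr_in G \<pi> = {\<chi> \<in> irr_chars G. Re (char_inner G \<chi> (character G \<pi>)) > 0}"

definition povm :: "nat \<Rightarrow> ('x \<Rightarrow> complex mat) \<Rightarrow> bool" where
  "povm n E \<longleftrightarrow> (\<forall>x. psd n (E x)) \<and> finite {x. E x \<noteq> 0\<^sub>m n n} \<and>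
     (\<forall>i<n. \<forall>j<n. (\<Sum>x\<in>{x. E x \<noteq> 0\<^sub>m n n}. E x $$ (i,j)) = 1\<^sub>m n $$ (i,j))"

definition algorithm :: "nat \<Rightarrow> nat \<Rightarrow> nat \<Rightarrow> complex vec \<Rightarrow> complex mat list \<Rightarrow> ('x \<Rightarrow> complex mat) \<Rightarrow> bool" where
  "algorithm d t N \<psi> Us E \<longleftrightarrow> N \<ge> 1 \<and> \<psi> \<in> carrier_vec (d * N) \<and> vinner \<psi> \<psi> = 1 \<and>
     length Us = t \<and> (\<forall>U\<in>set Us. unitary_mat (d * N) U) \<and> povm (d * N) E"

text \<open>psi_a = U_t (pi(a) \<otimes> I) ... U_1 (pi(a) \<otimes> I) psi, with Us = [U_1, ..., U_t].\<close>
definition run :: "complex mat \<Rightarrow> nat \<Rightarrow> complex vec \<Rightarrow> complex mat list \<Rightarrow> complex vec" where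
  "run A N \<psi> Us = foldl (\<lambda>v U. U *\<^sub>v (tensor_id A N *\<^sub>v v)) \<psi> Us"

definition success :: "('g,'b) monoid_scheme \<Rightarrow> ('g \<Rightarrow> complex mat) \<Rightarrow> ('g \<Rightarrow> 'x) \<Rightarrow>
     nat \<Rightarrow> complex vec \<Rightarrow> complex mat list \<Rightarrow> ('x \<Rightarrow> complex mat) \<Rightarrow> real" where
  "success G \<pi> f N \<psi> Us E =
     (\<Sum>a\<in>carrier G. Re (vinner (run (\<pi> a) N \<psi> Us) (E (f a) *\<^sub>v run (\<pi> a) N \<psi> Us)))
       / real (card (carrier G))"

definition opt_success :: "('g,'b) monoid_scheme \<Rightarrow> nat \<Rightarrow> ('g \<Rightarrow> complex mat) \<Rightarrow> ('g \<Rightarrow> 'x) \<Rightarrow> nat \<Rightarrow> real" where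
  "opt_success G d \<pi> f t =
     Sup {success G \<pi> f N \<psi> Us E | N \<psi> Us E. algorithm d t N \<psi> Us E}"

end

theory Submission
  imports Defs "Jordan_Normal_Form.Char_Poly"
begin

text \<open>If \<open>J : V \<rightarrow> W \<otimes> \<complex>\<^sup>M\<close> is an isometry intertwining \<open>\<pi>\<close> with \<open>\<pi>' \<otimes> I\<close>, every algorithm
  for \<open>V\<close> can be simulated on \<open>W\<close>: conjugate its unitaries by \<open>K = J \<otimes> I\<^sub>N\<close>, letting them act
  as the identity on the orthogonal complement of the range of \<open>K\<close>, and pull the POVM back
  along \<open>K\<close>. All final states are then images under \<open>K\<close> of the original ones, so the success
  probability is unchanged.

  Such a \<open>J\<close> exists as soon as every irreducible constituent of \<open>V\<close> occurs in \<open>W\<close>. Split off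
  an irreducible subrepresentation \<open>\<rho>\<close> of \<open>V\<close>. Since \<open>\<langle>\<chi>\<^sub>\<rho>, \<chi>\<^sub>W\<rangle>\<close> is a positive multiple of
  the squared norm of the group averages \<open>\<Sum>\<^sub>g \<pi>'(g) E\<^sub>k\<^sub>l \<rho>(g)\<^sup>-\<^sup>1\<close> of the matrix units, one of these
  intertwiners is nonzero, and by Schur's lemma it is a multiple of an isometry. The orthogonal
  complement of \<open>\<rho>\<close> is again invariant, so induction on the dimension embeds it into some
  \<open>W \<otimes> \<complex>\<^sup>M\<^sup>'\<close>, and stacking the two pieces embeds \<open>V\<close> into \<open>W \<otimes> \<complex>\<^sup>1\<^sup>+\<^sup>M\<^sup>'\<close>. As the hypothesis
  \<open>I(V) = I(W)\<close> is symmetric, both problems admit exactly the same success probabilities.\<close>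

lemma adj_dim[simp]: "dim_row (adj A) = dim_col A" "dim_col (adj A) = dim_row A"
  by (auto simp: adj_def)

lemma adj_carrier[simp,intro]: "A \<in> carrier_mat n m \<Longrightarrow> adj A \<in> carrier_mat m n"
  by (auto simp: adj_def)

lemma adj_index[simp]: "i < dim_col A \<Longrightarrow> j < dim_row A \<Longrightarrow> adj A $$ (i,j) = cnj (A $$ (j,i))"
  by (auto simp: adj_def)

lemma adj_adj[simp]: "adj (adj A) = A"
  by (rule eq_matI) auto

lemma adj_mult: assumes "A \<in> carrier_mat n m" "B \<in> carrier_mat m p"
  shows "adj (A * B) = adj B * adj A"
  by (rule eq_matI) (use assms in \<open>auto simp: scalar_prod_def row_def col_def intro!: sum.cong\<close>)

lemma adj_one[simp]: "adj (1\<^sub>m n) = 1\<^sub>m n"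
  by (rule eq_matI) auto

lemma adj_zero[simp]: "adj (0\<^sub>m n m) = 0\<^sub>m m n"
  by (rule eq_matI) auto

lemma adj_add: assumes "A \<in> carrier_mat n m" "B \<in> carrier_mat n m"
  shows "adj (A + B) = adj A + adj B"
  by (rule eq_matI) (use assms in auto)

lemma adj_minus: assumes "A \<in> carrier_mat n m" "B \<in> carrier_mat n m"
  shows "adj (A - B) = adj A - adj B"
  by (rule eq_matI) (use assms in auto)

lemma adj_mult_index:
  assumes "C \<in> carrier_mat n j" "D \<in> carrier_mat n k" "a < j" "b < k"
  shows "(adj C * D) $$ (a,b) = (\<Sum>i<n. cnj (C $$ (i,a)) * D $$ (i,b))"
  using assms by (simp add: scalar_prod_def row_def col_def atLeast0LessThan)

lemma isometry_mult:
  assumes B: "B \<in> carrier_mat p k" and BB: "adj B * B = 1\<^sub>m k"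
    and C: "C \<in> carrier_mat k j" and CC: "adj C * C = 1\<^sub>m j"
  shows "adj (B * C) * (B * C) = 1\<^sub>m j"
proof -
  have "adj (B * C) * (B * C) = adj C * adj B * (B * C)"
    by (simp only: adj_mult[OF B C])
  also have "\<dots> = adj C * (adj B * (B * C))"
    using B C by (intro assoc_mult_mat) auto
  also have "adj B * (B * C) = adj B * B * C"
    using B C by (intro assoc_mult_mat[symmetric]) auto
  finally show ?thesis using C by (simp add: BB CC)
qed

lemma vinner_adj: assumes "A \<in> carrier_mat n m" "v \<in> carrier_vec n" "w \<in> carrier_vec m"
  shows "vinner v (A *\<^sub>v w) = vinner (adj A *\<^sub>v v) w"
proof -
  have "vinner v (A *\<^sub>v w) = (\<Sum>i<n. cnj (v $ i) * (\<Sum>j<m. A $$ (i,j) * w $ j))"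
    unfolding vinner_def using assms
    by (intro sum.cong) (auto simp: scalar_prod_def row_def atLeast0LessThan)
  also have "\<dots> = (\<Sum>j<m. \<Sum>i<n. cnj (v $ i) * A $$ (i,j) * w $ j)"
    by (simp add: sum_distrib_left mult.assoc sum.swap[of _ "{..<m}"])
  also have "\<dots> = (\<Sum>j<m. cnj (\<Sum>i<n. cnj (A $$ (i,j)) * v $ i) * w $ j)"
    by (simp add: sum_distrib_right sum_distrib_left mult.commute mult.left_commute)
  also have "\<dots> = vinner (adj A *\<^sub>v v) w"
    unfolding vinner_def using assms
    by (intro sum.cong) (auto simp: scalar_prod_def row_def atLeast0LessThan)
  finally show ?thesis .
qed

lemma sum_cnj_mult_self:
  fixes z :: "'i \<Rightarrow> complex"
  shows "(\<Sum>x\<in>A. cnj (z x) * z x) = of_real (\<Sum>x\<in>A. (cmod (z x))\<^sup>2)"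
  unfolding of_real_sum by (intro sum.cong refl) (simp only: complex_norm_square mult.commute)

lemma vinner_self: "vinner v v = of_real (\<Sum>i<dim_vec v. (cmod (v $ i))\<^sup>2)"
  unfolding vinner_def by (rule sum_cnj_mult_self)

lemma vinner_self_nonneg: "Re (vinner v v) \<ge> 0" "Im (vinner v v) = 0"
  unfolding vinner_self by (auto intro: sum_nonneg)

lemma vinner_self_eq_0: assumes "v \<in> carrier_vec n" "vinner v v = 0" shows "v = 0\<^sub>v n"
proof -
  have "(\<Sum>i<n. (cmod (v $ i))\<^sup>2) = 0" using assms vinner_self[of v]
    by (metis carrier_vecD of_real_eq_0_iff)
  hence "\<forall>i\<in>{..<n}. (cmod (v $ i))\<^sup>2 = 0" by (subst (asm) sum_nonneg_eq_0_iff) auto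
  thus ?thesis using assms by (intro eq_vecI) auto
qed

lemma vinner_add_right: assumes "v \<in> carrier_vec n" "w \<in> carrier_vec n" "u \<in> carrier_vec n"
  shows "vinner v (w + u) = vinner v w + vinner v u"
  using assms by (auto simp: vinner_def sum.distrib algebra_simps)

lemma eq_mat_by_mult_vec:
  fixes A B :: "'a::comm_ring_1 mat"
  assumes A: "A \<in> carrier_mat n m" and B: "B \<in> carrier_mat n m"
    and eq: "\<And>v. v \<in> carrier_vec m \<Longrightarrow> A *\<^sub>v v = B *\<^sub>v v"
  shows "A = B"
proof (rule eq_matI)
  fix i j assume "i < dim_row B" "j < dim_col B"
  hence "i < n" "j < m" using B by auto
  moreover have "(A *\<^sub>v unit_vec m j) $ i = (B *\<^sub>v unit_vec m j) $ i" using eq[of "unit_vec m j"] by simp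
  ultimately show "A $$ (i, j) = B $$ (i, j)" using A B by (simp add: scalar_prod_right_unit)
qed (use A B in auto)

lemma mtrace_mult_comm: assumes A: "A \<in> carrier_mat n m" and B: "B \<in> carrier_mat m n"
  shows "mtrace (A * B) = mtrace (B * A)"
proof -
  have "mtrace (A * B) = (\<Sum>i<n. \<Sum>k<m. A $$ (i,k) * B $$ (k,i))"
    unfolding mtrace_def using A B
    by (intro sum.cong refl) (auto simp: scalar_prod_def row_def col_def atLeast0LessThan)
  also have "\<dots> = (\<Sum>k<m. \<Sum>i<n. B $$ (k,i) * A $$ (i,k))"
    by (subst sum.swap) (simp add: mult.commute)
  also have "\<dots> = mtrace (B * A)"
    unfolding mtrace_def using A B
    by (intro sum.cong refl) (auto simp: scalar_prod_def row_def col_def atLeast0LessThan)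
  finally show ?thesis .
qed

lemma mtrace_add: "A \<in> carrier_mat n n \<Longrightarrow> B \<in> carrier_mat n n \<Longrightarrow> mtrace (A + B) = mtrace A + mtrace B"
  unfolding mtrace_def by (simp add: sum.distrib)

lemma mtrace_one: "mtrace (1\<^sub>m n) = of_nat n"
  unfolding mtrace_def by simp

lemma mtrace_isometry: assumes B: "B \<in> carrier_mat p k" and BB: "adj B * B = 1\<^sub>m k"
  shows "mtrace (B * adj B) = of_nat k"
  using mtrace_mult_comm[OF B adj_carrier[OF B]] BB by (simp add: mtrace_one)

lemma mtrace_adj: "A \<in> carrier_mat n n \<Longrightarrow> mtrace (adj A) = cnj (mtrace A)"
  unfolding mtrace_def by simp

lemma mtrace_adj_mult:
  assumes "A \<in> carrier_mat n n" "B \<in> carrier_mat n n"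
  shows "mtrace (adj A * B) = (\<Sum>k<n. \<Sum>i<n. cnj (A $$ (i,k)) * B $$ (i,k))"
  unfolding mtrace_def using assms by (intro sum.cong refl adj_mult_index) auto

lemma sum_lessThan_add_split:
  fixes f :: "nat \<Rightarrow> 'a::comm_monoid_add"
  shows "(\<Sum>a<Ma+Mb. f a) = (\<Sum>a<Ma. f a) + (\<Sum>b<Mb. f (Ma + b))"
proof -
  have "(\<Sum>a<Ma+Mb. f a) = (\<Sum>a<Ma. f a) + (\<Sum>a\<in>{Ma..<Ma+Mb}. f a)"
    by (metis finite_lessThan finite_atLeastLessThan ivl_disj_int_one(2) ivl_disj_un_one(2)
        le_add1 sum.union_disjoint)
  also have "(\<Sum>a\<in>{Ma..<Ma+Mb}. f a) = (\<Sum>b<Mb. f (Ma + b))"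
    using sum.shift_bounds_nat_ivl[of f 0 Ma Mb]
    by (simp add: lessThan_atLeast0 add.commute)
  finally show ?thesis .
qed

lemma sum_lessThan_mult_split:
  fixes f :: "nat \<Rightarrow> 'a::comm_monoid_add"
  shows "(\<Sum>i<n*M. f i) = (\<Sum>w<n. \<Sum>a<M. f (w*M + a))"
proof (induction n)
  case (Suc n)
  have "(\<Sum>i<Suc n*M. f i) = (\<Sum>i<n*M. f i) + (\<Sum>a<M. f (n*M + a))"
    using sum_lessThan_add_split[of f "n*M" M] by (simp add: add.commute)
  with Suc show ?case by simp
qed simp

lemma sum_lessThan_mult_mod_eq:
  fixes g :: "nat \<Rightarrow> 'a::comm_monoid_add"
  assumes "c < N"
  shows "(\<Sum>k<m*N. if k mod N = c then g k else 0) = (\<Sum>r<m. g (r*N + c))"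
proof -
  have "(\<Sum>k<m*N. if k mod N = c then g k else 0)
      = (\<Sum>r<m. \<Sum>a<N. if a = c then g (r*N+c) else 0)"
    unfolding sum_lessThan_mult_split by (intro sum.cong refl) auto
  thus ?thesis using assms by simp
qed

lemma tensor_id_dim[simp]:
  "dim_row (tensor_id A N) = dim_row A * N" "dim_col (tensor_id A N) = dim_col A * N"
  by (auto simp: tensor_id_def)

lemma tensor_id_carrier[simp,intro]: "A \<in> carrier_mat n m \<Longrightarrow> tensor_id A N \<in> carrier_mat (n*N) (m*N)"
  by (auto simp: tensor_id_def)

lemma tensor_id_index[simp]: "i < dim_row A * N \<Longrightarrow> j < dim_col A * N \<Longrightarrow>
  tensor_id A N $$ (i,j) = (if i mod N = j mod N then A $$ (i div N, j div N) else 0)"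
  by (auto simp: tensor_id_def)

lemma tensor_id_mult_index:
  assumes A: "A \<in> carrier_mat q q" and X: "X \<in> carrier_mat (q*M) c" and i: "i < q*M" and j: "j < c"
  shows "(tensor_id A M * X) $$ (i,j) = (\<Sum>r<q. A $$ (i div M, r) * X $$ (r*M + i mod M, j))"
proof -
  have M: "M > 0" using i by (cases M) auto
  have "(tensor_id A M * X) $$ (i,j)
      = (\<Sum>k<q*M. if k mod M = i mod M then A $$ (i div M, k div M) * X $$ (k,j) else 0)"
    using A X i j by (auto simp: scalar_prod_def row_def col_def atLeast0LessThan intro!: sum.cong)
  also have "\<dots> = (\<Sum>r<q. A $$ (i div M, (r*M + i mod M) div M) * X $$ (r*M + i mod M, j))"
    using M by (intro sum_lessThan_mult_mod_eq) auto
  finally show ?thesis using M by simp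
qed

lemma tensor_id_mult:
  assumes A: "A \<in> carrier_mat n m" and B: "B \<in> carrier_mat m p"
  shows "tensor_id A N * tensor_id B N = tensor_id (A * B) N"
proof (rule eq_matI)
  fix i j assume i: "i < dim_row (tensor_id (A * B) N)" and j: "j < dim_col (tensor_id (A * B) N)"
  have i': "i < n * N" and j': "j < p * N" using i j A B by auto
  have N: "N > 0" using i' by (cases N) auto
  have div_eq: "(r * N + j mod N) div N = r" for r using N by simp
  have "(tensor_id A N * tensor_id B N) $$ (i,j) = (\<Sum>k<m*N. if k mod N = j mod N then
        (if i mod N = j mod N then A $$ (i div N, k div N) * B $$ (k div N, j div N) else 0) else 0)"
    using A B i' j' by (auto simp: scalar_prod_def row_def col_def atLeast0LessThan intro!: sum.cong)
  also have "\<dots> = (\<Sum>r<m. if i mod N = j mod N then A $$ (i div N, (r * N + j mod N) div N)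
      * B $$ ((r * N + j mod N) div N, j div N) else 0)"
    using N by (intro sum_lessThan_mult_mod_eq) simp
  also have "\<dots> = (\<Sum>r<m. if i mod N = j mod N then A $$ (i div N, r) * B $$ (r, j div N) else 0)"
    by (simp only: div_eq)
  also have "\<dots> = tensor_id (A * B) N $$ (i,j)"
    using A B i' j' by (simp add: less_mult_imp_div_less scalar_prod_def row_def col_def atLeast0LessThan)
  finally show "(tensor_id A N * tensor_id B N) $$ (i,j) = tensor_id (A * B) N $$ (i,j)" .
qed (use A B in auto)

lemma tensor_id_adj: "adj (tensor_id A N) = tensor_id (adj A) N"
  by (rule eq_matI) (auto simp: less_mult_imp_div_less)

lemma tensor_id_one: "tensor_id (1\<^sub>m n) N = 1\<^sub>m (n*N)"
proof (rule eq_matI)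
  fix i j assume "i < dim_row (1\<^sub>m (n*N))" "j < dim_col (1\<^sub>m (n*N))"
  moreover have "(i mod N = j mod N \<and> i div N = j div N) = (i = j)"
    by (metis div_mult_mod_eq)
  ultimately show "tensor_id (1\<^sub>m n) N $$ (i,j) = 1\<^sub>m (n*N) $$ (i,j)"
    by (auto simp: less_mult_imp_div_less)
qed auto

lemma tensor_id_1: "A \<in> carrier_mat n m \<Longrightarrow> tensor_id A 1 = A"
  by (rule eq_matI) auto

lemma tensor_id_tensor_id: "tensor_id (tensor_id A M) N = tensor_id A (M*N)"
proof (rule eq_matI)
  fix i j assume ij: "i < dim_row (tensor_id A (M*N))" "j < dim_col (tensor_id A (M*N))"
  have i: "i < dim_row A * M * N" and j: "j < dim_col A * M * N" using ij by (auto simp: mult.assoc)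
  have N: "N > 0" using i by (cases N) auto
  have mod_split: "x mod (M*N) = N * (x div N mod M) + x mod N" for x :: nat
    by (metis mod_mult2_eq mult.commute)
  have "(i mod (M*N) = j mod (M*N)) = (i mod N = j mod N \<and> i div N mod M = j div N mod M)"
  proof
    assume "i mod (M*N) = j mod (M*N)"
    hence "(N * (i div N mod M) + i mod N) div N = (N * (j div N mod M) + j mod N) div N"
          "(N * (i div N mod M) + i mod N) mod N = (N * (j div N mod M) + j mod N) mod N"
      unfolding mod_split by auto
    thus "i mod N = j mod N \<and> i div N mod M = j div N mod M" using N by simp
  qed (simp add: mod_split)
  moreover have "x div N div M = x div (M*N)" for x :: nat
    by (metis div_mult2_eq mult.commute)
  moreover have "i div N < dim_row A * M" "j div N < dim_col A * M"
    using i j by (auto simp: less_mult_imp_div_less)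
  ultimately show "tensor_id (tensor_id A M) N $$ (i,j) = tensor_id A (M*N) $$ (i,j)"
    using i j ij by auto
qed (auto simp: mult.assoc)

lemma tensor_id_intertwines:
  assumes A: "A \<in> carrier_mat d d" and A': "A' \<in> carrier_mat d' d'" and J: "J \<in> carrier_mat (d' * M) d"
    and inter: "tensor_id A' M * J = J * A"
  shows "tensor_id A' (M * N) * tensor_id J N = tensor_id J N * tensor_id A N"
proof -
  have "tensor_id A' (M * N) * tensor_id J N = tensor_id (tensor_id A' M * J) N"
    unfolding tensor_id_tensor_id[symmetric] by (rule tensor_id_mult[OF tensor_id_carrier[OF A'] J])
  thus ?thesis by (simp add: inter tensor_id_mult[OF J A])
qed

section \<open>Transporting unitaries and measurements along an isometry\<close>

definition iso_extend :: "complex mat \<Rightarrow> complex mat \<Rightarrow> complex mat" where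
  "iso_extend K U = K * U * adj K + (1\<^sub>m (dim_row K) - K * adj K)"

locale isometry =
  fixes K :: "complex mat" and n m :: nat
  assumes K_carrier: "K \<in> carrier_mat n m" and adj_K_K: "adj K * K = 1\<^sub>m m"
begin

definition compl_proj :: "complex mat" where "compl_proj = 1\<^sub>m n - K * adj K"

lemma dim_K[simp]: "dim_row K = n" "dim_col K = m"
  using K_carrier by auto

lemma carriers[simp]: "K \<in> carrier_mat n m" "adj K \<in> carrier_mat m n" "compl_proj \<in> carrier_mat n n"
    "K * adj K \<in> carrier_mat n n"
  using K_carrier by (auto simp: compl_proj_def)

lemma compl_proj_K: "compl_proj * K = 0\<^sub>m n m"
proof -
  have "compl_proj * K = 1\<^sub>m n * K - K * adj K * K" unfolding compl_proj_def
    by (rule minus_mult_distrib_mat[OF one_carrier_mat carriers(4) carriers(1)])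
  also have "K * adj K * K = K * (adj K * K)" by (rule assoc_mult_mat[OF carriers(1,2,1)])
  finally show ?thesis by (simp add: adj_K_K)
qed

lemma adj_compl_proj: "adj compl_proj = compl_proj"
proof -
  have "adj compl_proj = adj (1\<^sub>m n) - adj (K * adj K)"
    unfolding compl_proj_def by (rule adj_minus[OF one_carrier_mat carriers(4)])
  also have "adj (K * adj K) = K * adj K" using adj_mult[OF carriers(1,2)] by simp
  finally show ?thesis unfolding compl_proj_def by simp
qed

lemma adj_K_compl_proj: "adj K * compl_proj = 0\<^sub>m m n"
  using adj_mult[OF carriers(3,1)] by (simp add: compl_proj_K adj_compl_proj)

lemma compl_proj_idem: "compl_proj * compl_proj = compl_proj"
proof -
  have "compl_proj * compl_proj = compl_proj * 1\<^sub>m n - compl_proj * (K * adj K)"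
    by (subst (2) compl_proj_def) (rule mult_minus_distrib_mat[OF carriers(3) one_carrier_mat carriers(4)])
  also have "compl_proj * (K * adj K) = compl_proj * K * adj K"
    by (rule assoc_mult_mat[symmetric, OF carriers(3,1,2)])
  also have "compl_proj * 1\<^sub>m n = compl_proj" by (rule right_mult_one_mat[OF carriers(3)])
  also have "compl_proj - compl_proj * K * adj K = compl_proj"
    unfolding compl_proj_K using carrier_matD[OF carriers(3)] by (intro eq_matI) auto
  finally show ?thesis .
qed

lemma iso_extend_eq: "iso_extend K U = K * U * adj K + compl_proj"
  by (simp add: iso_extend_def compl_proj_def)

lemma conj_carrier: "U \<in> carrier_mat m m \<Longrightarrow> K * U * adj K \<in> carrier_mat n n"
  by (meson carriers mult_carrier_mat)

lemma iso_extend_carrier: "U \<in> carrier_mat m m \<Longrightarrow> iso_extend K U \<in> carrier_mat n n"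
  unfolding iso_extend_eq by (intro add_carrier_mat conj_carrier carriers)

lemma iso_extend_mult_K: assumes U: "U \<in> carrier_mat m m" shows "iso_extend K U * K = K * U"
proof -
  have KU: "K * U \<in> carrier_mat n m" using carriers(1) U by (rule mult_carrier_mat)
  have "iso_extend K U * K = K * U * adj K * K + compl_proj * K" unfolding iso_extend_eq
    by (rule add_mult_distrib_mat[OF conj_carrier[OF U] carriers(3,1)])
  also have "K * U * adj K * K = K * U * (adj K * K)" by (rule assoc_mult_mat[OF KU carriers(2,1)])
  finally show ?thesis using right_mult_one_mat[OF KU] right_add_zero_mat[OF KU]
    by (simp add: adj_K_K compl_proj_K)
qed

lemma adj_iso_extend: assumes U: "U \<in> carrier_mat m m"
  shows "adj (iso_extend K U) = iso_extend K (adj U)"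
proof -
  have KU: "K * U \<in> carrier_mat n m" using carriers(1) U by (rule mult_carrier_mat)
  have "adj (iso_extend K U) = adj (K * U * adj K) + adj compl_proj" unfolding iso_extend_eq
    by (rule adj_add[OF conj_carrier[OF U] carriers(3)])
  also have "adj (K * U * adj K) = K * adj (K * U)" using adj_mult[OF KU carriers(2)] by simp
  also have "adj (K * U) = adj U * adj K" by (rule adj_mult[OF carriers(1) U])
  also have "K * (adj U * adj K) = K * adj U * adj K"
    by (rule assoc_mult_mat[symmetric, OF carriers(1) adj_carrier[OF U] carriers(2)])
  finally show ?thesis unfolding adj_compl_proj iso_extend_eq .
qed

lemma iso_extend_mult:
  assumes A: "A \<in> carrier_mat m m" and B: "B \<in> carrier_mat m m"
  shows "iso_extend K A * iso_extend K B = iso_extend K (A * B)"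
proof -
  have KA: "K * A \<in> carrier_mat n m" using carriers(1) A by (rule mult_carrier_mat)
  have KB: "K * B \<in> carrier_mat n m" using carriers(1) B by (rule mult_carrier_mat)
  note c = conj_carrier[OF A] conj_carrier[OF B] conj_carrier[OF mult_carrier_mat[OF A B]]
  have "iso_extend K A * iso_extend K B = K * A * adj K * (K * B * adj K) + K * A * adj K * compl_proj
      + (compl_proj * (K * B * adj K) + compl_proj * compl_proj)"
    unfolding iso_extend_eq
    by (simp add: add_mult_distrib_mat[OF c(1) carriers(3) add_carrier_mat[OF carriers(3)]]
        mult_add_distrib_mat[OF c(1) c(2) carriers(3)] mult_add_distrib_mat[OF carriers(3) c(2) carriers(3)]
        del: assoc_mult_mat)
  also have "K * A * adj K * (K * B * adj K) = K * A * (adj K * (K * B * adj K))"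
    by (rule assoc_mult_mat[OF KA carriers(2) c(2)])
  also have "adj K * (K * B * adj K) = adj K * (K * B) * adj K"
    by (rule assoc_mult_mat[symmetric, OF carriers(2) KB carriers(2)])
  also have "adj K * (K * B) = B"
    using assoc_mult_mat[symmetric, OF carriers(2,1) B] adj_K_K left_mult_one_mat[OF B] by simp
  also have "K * A * (B * adj K) = K * A * B * adj K"
    by (rule assoc_mult_mat[symmetric, OF KA B carriers(2)])
  also have "K * A * B = K * (A * B)" by (rule assoc_mult_mat[OF carriers(1) A B])
  also have "K * A * adj K * compl_proj = K * A * (adj K * compl_proj)"
    by (rule assoc_mult_mat[OF KA carriers(2,3)])
  also have "compl_proj * (K * B * adj K) = compl_proj * (K * B) * adj K"
    by (rule assoc_mult_mat[symmetric, OF carriers(3) KB carriers(2)])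
  also have "compl_proj * (K * B) = compl_proj * K * B"
    by (rule assoc_mult_mat[symmetric, OF carriers(3,1) B])
  finally show ?thesis
    using KA B c(3) carriers(2,3) unfolding iso_extend_eq
    by (simp add: adj_K_compl_proj compl_proj_K compl_proj_idem right_mult_zero_mat[OF KA])
qed

lemma iso_extend_one: "iso_extend K (1\<^sub>m m) = 1\<^sub>m n"
proof -
  have "K * 1\<^sub>m m * adj K + compl_proj = K * adj K + (1\<^sub>m n - K * adj K)"
    by (simp add: right_mult_one_mat[OF carriers(1)] compl_proj_def)
  also have "\<dots> = 1\<^sub>m n" using carriers(4) by (intro eq_matI) auto
  finally show ?thesis unfolding iso_extend_eq .
qed

lemma iso_extend_unitary: assumes "unitary_mat m U" shows "unitary_mat n (iso_extend K U)"
  using assms iso_extend_carrier iso_extend_mult[of "adj U" U] iso_extend_mult[of U "adj U"]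
  by (auto simp: unitary_mat_def adj_iso_extend iso_extend_one)

lemma adj_K_K_vec: assumes v: "v \<in> carrier_vec m" shows "adj K *\<^sub>v (K *\<^sub>v v) = v"
proof -
  have "adj K *\<^sub>v (K *\<^sub>v v) = (adj K * K) *\<^sub>v v"
    by (rule assoc_mult_mat_vec[symmetric, OF carriers(2,1) v])
  thus ?thesis using v by (simp add: adj_K_K)
qed

lemma vinner_K: assumes v: "v \<in> carrier_vec m" and w: "w \<in> carrier_vec m"
  shows "vinner (K *\<^sub>v v) (K *\<^sub>v w) = vinner v w"
  using vinner_adj[OF carriers(1) mult_mat_vec_carrier[OF carriers(1) v] w] adj_K_K_vec[OF v] by simp

text \<open>The projection onto the orthogonal complement of the range of \<open>K\<close> is assigned to an
  arbitrary outcome \<open>x\<^sub>0\<close>, so that the transported elements still sum to the identity.\<close>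

definition iso_extend_povm :: "'x \<Rightarrow> ('x \<Rightarrow> complex mat) \<Rightarrow> 'x \<Rightarrow> complex mat" where
  "iso_extend_povm x0 E x = K * E x * adj K + (if x = x0 then compl_proj else 0\<^sub>m n n)"

lemma iso_extend_povm_carrier: "E x \<in> carrier_mat m m \<Longrightarrow> iso_extend_povm x0 E x \<in> carrier_mat n n"
  unfolding iso_extend_povm_def by (rule add_carrier_mat) auto

lemma vinner_compl_proj: assumes w: "w \<in> carrier_vec n"
  shows "vinner w (compl_proj *\<^sub>v w) = vinner (compl_proj *\<^sub>v w) (compl_proj *\<^sub>v w)"
proof -
  have "compl_proj *\<^sub>v w = compl_proj *\<^sub>v (compl_proj *\<^sub>v w)"
    using assoc_mult_mat_vec[OF carriers(3,3) w] by (simp add: compl_proj_idem)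
  hence "vinner w (compl_proj *\<^sub>v w) = vinner w (compl_proj *\<^sub>v (compl_proj *\<^sub>v w))" by simp
  also have "\<dots> = vinner (compl_proj *\<^sub>v w) (compl_proj *\<^sub>v w)"
    using vinner_adj[OF carriers(3) w mult_mat_vec_carrier[OF carriers(3) w]] by (simp add: adj_compl_proj)
  finally show ?thesis .
qed

lemma vinner_iso_extend_povm:
  assumes E: "E x \<in> carrier_mat m m" and w: "w \<in> carrier_vec n"
  shows "vinner w (iso_extend_povm x0 E x *\<^sub>v w) = vinner (adj K *\<^sub>v w) (E x *\<^sub>v (adj K *\<^sub>v w))
     + (if x = x0 then vinner (compl_proj *\<^sub>v w) (compl_proj *\<^sub>v w) else 0)"
proof -
  have c: "K * E x * adj K \<in> carrier_mat n n" "(if x = x0 then compl_proj else 0\<^sub>m n n) \<in> carrier_mat n n"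
    using conj_carrier[OF E] by auto
  have Kw: "adj K *\<^sub>v w \<in> carrier_vec m" using carriers(2) w by (rule mult_mat_vec_carrier)
  have KE: "K * E x \<in> carrier_mat n m" using carriers(1) E by (rule mult_carrier_mat)
  have "(K * E x * adj K) *\<^sub>v w = K *\<^sub>v (E x *\<^sub>v (adj K *\<^sub>v w))"
    using assoc_mult_mat_vec[OF KE carriers(2) w] assoc_mult_mat_vec[OF carriers(1) E Kw] by simp
  hence "vinner w ((K * E x * adj K) *\<^sub>v w) = vinner (adj K *\<^sub>v w) (E x *\<^sub>v (adj K *\<^sub>v w))"
    using vinner_adj[OF carriers(1) w mult_mat_vec_carrier[OF E Kw]] by simp
  moreover have "iso_extend_povm x0 E x *\<^sub>v w
      = (K * E x * adj K) *\<^sub>v w + (if x = x0 then compl_proj else 0\<^sub>m n n) *\<^sub>v w"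
    unfolding iso_extend_povm_def by (rule add_mult_distrib_mat_vec[OF c w])
  ultimately show ?thesis
    using vinner_add_right[OF w mult_mat_vec_carrier[OF c(1) w] mult_mat_vec_carrier[OF c(2) w]]
      vinner_compl_proj[OF w] w by (auto simp: vinner_def)
qed

lemma vinner_iso_extend_povm_K:
  assumes E: "E x \<in> carrier_mat m m" and v: "v \<in> carrier_vec m"
  shows "vinner (K *\<^sub>v v) (iso_extend_povm x0 E x *\<^sub>v (K *\<^sub>v v)) = vinner v (E x *\<^sub>v v)"
proof -
  have "compl_proj *\<^sub>v (K *\<^sub>v v) = (compl_proj * K) *\<^sub>v v"
    by (rule assoc_mult_mat_vec[symmetric, OF carriers(3,1) v])
  also have "\<dots> = 0\<^sub>v n" unfolding compl_proj_K using v by (intro eq_vecI) auto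
  finally have "compl_proj *\<^sub>v (K *\<^sub>v v) = 0\<^sub>v n" .
  thus ?thesis using E v mult_mat_vec_carrier[OF carriers(1) v]
    by (simp add: vinner_iso_extend_povm adj_K_K_vec) (simp add: vinner_def)
qed

lemma iso_extend_povm_psd: assumes "psd m (E x)" shows "psd n (iso_extend_povm x0 E x)"
proof -
  have E: "E x \<in> carrier_mat m m" using assms by (simp add: psd_def)
  have "Im (vinner w (iso_extend_povm x0 E x *\<^sub>v w)) = 0 \<and> Re (vinner w (iso_extend_povm x0 E x *\<^sub>v w)) \<ge> 0"
    if w: "w \<in> carrier_vec n" for w
  proof -
    have "adj K *\<^sub>v w \<in> carrier_vec m" using carriers(2) w by (rule mult_mat_vec_carrier)
    thus ?thesis using assms w vinner_self_nonneg[of "compl_proj *\<^sub>v w"]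
      by (auto simp: vinner_iso_extend_povm[where E=E and x=x, OF E] psd_def)
  qed
  thus ?thesis unfolding psd_def using iso_extend_povm_carrier[where E=E and x=x, OF E] by blast
qed

lemma sum_conj_index:
  assumes F: "finite F" and E: "\<And>x. x \<in> F \<Longrightarrow> E x \<in> carrier_mat m m"
    and S: "\<And>a b. a < m \<Longrightarrow> b < m \<Longrightarrow> (\<Sum>x\<in>F. E x $$ (a,b)) = 1\<^sub>m m $$ (a,b)"
    and i: "i < n" and j: "j < n"
  shows "(\<Sum>x\<in>F. (K * E x * adj K) $$ (i,j)) = (K * adj K) $$ (i,j)"
proof -
  have entry: "(K * E x * adj K) $$ (i,j) = (\<Sum>a<m. \<Sum>b<m. K $$ (i,a) * E x $$ (a,b) * cnj (K $$ (j,b)))"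
    if "x \<in> F" for x
  proof -
    have "(K * E x * adj K) $$ (i,j) = (\<Sum>b<m. (\<Sum>a<m. K $$ (i,a) * E x $$ (a,b)) * cnj (K $$ (j,b)))"
      using E[OF that] i j by (simp add: scalar_prod_def row_def col_def atLeast0LessThan del: assoc_mult_mat)
    also have "\<dots> = (\<Sum>b<m. \<Sum>a<m. K $$ (i,a) * E x $$ (a,b) * cnj (K $$ (j,b)))"
      by (simp add: sum_distrib_right)
    also have "\<dots> = (\<Sum>a<m. \<Sum>b<m. K $$ (i,a) * E x $$ (a,b) * cnj (K $$ (j,b)))"
      by (rule sum.swap)
    finally show ?thesis .
  qed
  have "(\<Sum>x\<in>F. (K * E x * adj K) $$ (i,j))
      = (\<Sum>x\<in>F. \<Sum>a<m. \<Sum>b<m. K $$ (i,a) * E x $$ (a,b) * cnj (K $$ (j,b)))"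
    by (rule sum.cong[OF refl entry])
  also have "\<dots> = (\<Sum>a<m. \<Sum>b<m. \<Sum>x\<in>F. K $$ (i,a) * E x $$ (a,b) * cnj (K $$ (j,b)))"
    by (simp add: sum.swap[of _ F] sum.swap[of _ F "{..<m}"])
  also have "\<dots> = (\<Sum>a<m. \<Sum>b<m. K $$ (i,a) * (\<Sum>x\<in>F. E x $$ (a,b)) * cnj (K $$ (j,b)))"
    by (simp add: sum_distrib_left sum_distrib_right)
  also have "\<dots> = (\<Sum>a<m. \<Sum>b<m. if b = a then K $$ (i,a) * cnj (K $$ (j,a)) else 0)"
    using S by (intro sum.cong refl) auto
  also have "\<dots> = (K * adj K) $$ (i,j)"
    using i j by (simp add: scalar_prod_def row_def col_def atLeast0LessThan)
  finally show ?thesis .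
qed

lemma iso_extend_povm_povm: assumes E: "povm m E" shows "povm n (iso_extend_povm x0 E)"
proof -
  define S where "S = insert x0 {x. E x \<noteq> 0\<^sub>m m m}"
  have finS: "finite S" using E by (simp add: povm_def S_def)
  have Ec: "\<And>x. E x \<in> carrier_mat m m" using E by (simp add: povm_def psd_def)
  have support: "{x. iso_extend_povm x0 E x \<noteq> 0\<^sub>m n n} \<subseteq> S"
    by (auto simp: S_def iso_extend_povm_def)
  have sum_E: "(\<Sum>x\<in>S. E x $$ (a,b)) = 1\<^sub>m m $$ (a,b)" if "a < m" "b < m" for a b
  proof -
    have "(\<Sum>x\<in>S. E x $$ (a,b)) = (\<Sum>x\<in>{x. E x \<noteq> 0\<^sub>m m m}. E x $$ (a,b))"
      using finS that by (intro sum.mono_neutral_right) (auto simp: S_def)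
    thus ?thesis using E that by (simp add: povm_def)
  qed
  have "(\<Sum>x\<in>{x. iso_extend_povm x0 E x \<noteq> 0\<^sub>m n n}. iso_extend_povm x0 E x $$ (i,j)) = 1\<^sub>m n $$ (i,j)"
    if i: "i < n" and j: "j < n" for i j
  proof -
    have "(\<Sum>x\<in>{x. iso_extend_povm x0 E x \<noteq> 0\<^sub>m n n}. iso_extend_povm x0 E x $$ (i,j))
        = (\<Sum>x\<in>S. iso_extend_povm x0 E x $$ (i,j))"
      using finS support i j by (intro sum.mono_neutral_left) auto
    also have "\<dots> = (\<Sum>x\<in>S. (K * E x * adj K) $$ (i,j) + (if x = x0 then compl_proj $$ (i,j) else 0))"
    proof (intro sum.cong refl)
      fix x
      have "(if x = x0 then compl_proj else 0\<^sub>m n n) \<in> carrier_mat n n" by auto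
      thus "iso_extend_povm x0 E x $$ (i,j)
          = (K * E x * adj K) $$ (i,j) + (if x = x0 then compl_proj $$ (i,j) else 0)"
        unfolding iso_extend_povm_def using i j by (subst index_add_mat(1)) auto
    qed
    also have "\<dots> = (\<Sum>x\<in>S. (K * E x * adj K) $$ (i,j)) + compl_proj $$ (i,j)"
      using finS by (simp add: sum.distrib S_def)
    also have "(\<Sum>x\<in>S. (K * E x * adj K) $$ (i,j)) = (K * adj K) $$ (i,j)"
      using finS Ec sum_E i j by (intro sum_conj_index) auto
    also have "compl_proj $$ (i,j) = 1\<^sub>m n $$ (i,j) - (K * adj K) $$ (i,j)"
      unfolding compl_proj_def using i j by (intro index_minus_mat(1)) auto
    finally show ?thesis by simp
  qed
  moreover have "finite {x. iso_extend_povm x0 E x \<noteq> 0\<^sub>m n n}"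
    using finS support finite_subset by blast
  ultimately show ?thesis
    using E by (auto simp: povm_def intro: iso_extend_povm_psd)
qed

lemma run_iso_extend:
  assumes A: "A \<in> carrier_mat d d" and A': "A' \<in> carrier_mat d' d'"
    and dims: "n = d' * N'" "m = d * N"
    and inter: "tensor_id A' N' * K = K * tensor_id A N"
    and v: "v \<in> carrier_vec m" and Us: "\<forall>U\<in>set Us. U \<in> carrier_mat m m"
  shows "run A' N' (K *\<^sub>v v) (map (iso_extend K) Us) = K *\<^sub>v run A N v Us"
  using v Us
proof (induction Us arbitrary: v)
  case (Cons U Us)
  have U: "U \<in> carrier_mat m m" using Cons.prems by simp
  have AN: "tensor_id A N \<in> carrier_mat m m" and AN': "tensor_id A' N' \<in> carrier_mat n n"
    using A A' dims by auto
  have w: "tensor_id A N *\<^sub>v v \<in> carrier_vec m" using AN Cons.prems(1) by (rule mult_mat_vec_carrier)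
  have "iso_extend K U *\<^sub>v (tensor_id A' N' *\<^sub>v (K *\<^sub>v v))
      = iso_extend K U *\<^sub>v ((tensor_id A' N' * K) *\<^sub>v v)"
    using assoc_mult_mat_vec[OF AN' carriers(1) Cons.prems(1)] by simp
  also have "\<dots> = iso_extend K U *\<^sub>v (K *\<^sub>v (tensor_id A N *\<^sub>v v))"
    using assoc_mult_mat_vec[OF carriers(1) AN Cons.prems(1)] by (simp add: inter)
  also have "\<dots> = (iso_extend K U * K) *\<^sub>v (tensor_id A N *\<^sub>v v)"
    by (rule assoc_mult_mat_vec[symmetric, OF iso_extend_carrier[OF U] carriers(1) w])
  also have "\<dots> = K *\<^sub>v (U *\<^sub>v (tensor_id A N *\<^sub>v v))"
    unfolding iso_extend_mult_K[OF U] by (rule assoc_mult_mat_vec[OF carriers(1) U w])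
  finally show ?case
    using Cons.IH[OF mult_mat_vec_carrier[OF U w]] Cons.prems(2) by (simp add: run_def)
qed (simp add: run_def)

end

lemma isometry_tensor_id:
  assumes J: "J \<in> carrier_mat n m" and JJ: "adj J * J = 1\<^sub>m m"
  shows "isometry (tensor_id J N) (n * N) (m * N)"
proof
  show "tensor_id J N \<in> carrier_mat (n * N) (m * N)" using J by simp
  show "adj (tensor_id J N) * tensor_id J N = 1\<^sub>m (m * N)"
    unfolding tensor_id_adj tensor_id_mult[OF adj_carrier[OF J] J] JJ tensor_id_one ..
qed

lemma run_carrier:
  assumes A: "A \<in> carrier_mat d d" and v: "v \<in> carrier_vec (d*N)"
    and Us: "\<forall>U\<in>set Us. U \<in> carrier_mat (d*N) (d*N)"
  shows "run A N v Us \<in> carrier_vec (d*N)"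
  using v Us
proof (induction Us arbitrary: v)
  case (Cons U Us)
  have "U *\<^sub>v (tensor_id A N *\<^sub>v v) \<in> carrier_vec (d*N)"
    using Cons.prems tensor_id_carrier[OF A] by (meson mult_mat_vec_carrier list.set_intros(1))
  thus ?case using Cons by (simp add: run_def)
qed (simp add: run_def)

lemma success_simulation:
  fixes G :: "('g,'b) monoid_scheme" and \<pi> \<pi>' :: "'g \<Rightarrow> complex mat" and f :: "'g \<Rightarrow> 'x"
  assumes J: "J \<in> carrier_mat (d' * M) d" and JJ: "adj J * J = 1\<^sub>m d" and M: "M \<ge> 1"
    and inter: "\<forall>g\<in>carrier G. tensor_id (\<pi>' g) M * J = J * \<pi> g"
    and \<pi>: "\<forall>g\<in>carrier G. \<pi> g \<in> carrier_mat d d" and \<pi>': "\<forall>g\<in>carrier G. \<pi>' g \<in> carrier_mat d' d'"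
    and alg: "algorithm d t N \<psi> Us E"
  shows "\<exists>N' \<psi>' Us' (E' :: 'x \<Rightarrow> complex mat). algorithm d' t N' \<psi>' Us' E' \<and>
           success G \<pi>' f N' \<psi>' Us' E' = success G \<pi> f N \<psi> Us E"
proof -
  define K where "K = tensor_id J N"
  have N: "N \<ge> 1" and \<psi>: "\<psi> \<in> carrier_vec (d * N)" and \<psi>1: "vinner \<psi> \<psi> = 1"
    and Us: "\<forall>U\<in>set Us. unitary_mat (d * N) U" and E: "povm (d * N) E"
    using alg by (auto simp: algorithm_def)
  have Us_carrier: "\<forall>U\<in>set Us. U \<in> carrier_mat (d * N) (d * N)"
    using Us by (simp add: unitary_mat_def)
  interpret isometry K "d' * M * N" "d * N"
    unfolding K_def by (rule isometry_tensor_id[OF J JJ])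
  have inter_K: "tensor_id (\<pi>' g) (M*N) * K = K * tensor_id (\<pi> g) N" if g: "g \<in> carrier G" for g
    unfolding K_def using \<pi> \<pi>' inter g J by (intro tensor_id_intertwines) auto
  define E' where "E' = iso_extend_povm (undefined :: 'x) E"
  have "algorithm d' t (M*N) (K *\<^sub>v \<psi>) (map (iso_extend K) Us) E'"
    using alg M N \<psi>1 Us iso_extend_unitary iso_extend_povm_povm[OF E] vinner_K[OF \<psi> \<psi>]
      mult_mat_vec_carrier[OF carriers(1) \<psi>]
    by (auto simp: algorithm_def E'_def mult.assoc)
  moreover have "success G \<pi>' f (M*N) (K *\<^sub>v \<psi>) (map (iso_extend K) Us) E' = success G \<pi> f N \<psi> Us E"
    unfolding success_def
  proof (intro arg_cong[where f="\<lambda>x. x / _"] sum.cong refl arg_cong[where f=Re])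
    fix a assume a: "a \<in> carrier G"
    have "run (\<pi> a) N \<psi> Us \<in> carrier_vec (d * N)"
      using run_carrier \<pi> a \<psi> Us_carrier by blast
    moreover have "run (\<pi>' a) (M*N) (K *\<^sub>v \<psi>) (map (iso_extend K) Us) = K *\<^sub>v run (\<pi> a) N \<psi> Us"
      using \<pi> \<pi>' a by (intro run_iso_extend[OF _ _ _ refl inter_K[OF a] \<psi> Us_carrier]) auto
    moreover have "E (f a) \<in> carrier_mat (d * N) (d * N)" using E by (simp add: povm_def psd_def)
    ultimately show "vinner (run (\<pi>' a) (M*N) (K *\<^sub>v \<psi>) (map (iso_extend K) Us))
            (E' (f a) *\<^sub>v run (\<pi>' a) (M*N) (K *\<^sub>v \<psi>) (map (iso_extend K) Us))
        = vinner (run (\<pi> a) N \<psi> Us) (E (f a) *\<^sub>v run (\<pi> a) N \<psi> Us)"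
      unfolding E'_def by (simp add: vinner_iso_extend_povm_K)
  qed
  ultimately show ?thesis by blast
qed

section \<open>Isometric bases of subspaces\<close>

lemma isometry_dim_le: assumes C: "C \<in> carrier_mat n j" and CC: "adj C * C = 1\<^sub>m j"
  shows "j \<le> n"
proof (rule ccontr)
  assume "\<not> j \<le> n"
  hence nj: "n < j" by simp
  define D where "D = mat j j (\<lambda>(a,b). if a < n then C $$ (a,b) else 0)"
  have Dc: "D \<in> carrier_mat j j" by (simp add: D_def)
  have "adj D * D = 1\<^sub>m j"
  proof (rule eq_matI)
    fix a b assume ab: "a < dim_row (1\<^sub>m j)" "b < dim_col (1\<^sub>m j)"
    have "(adj D * D) $$ (a,b) = (\<Sum>i<j. cnj (D $$ (i,a)) * D $$ (i,b))"
      using ab Dc by (intro adj_mult_index) auto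
    also have "\<dots> = (\<Sum>i<n. cnj (C $$ (i,a)) * C $$ (i,b))"
      using nj ab by (subst sum.mono_neutral_right[of "{..<j}" "{..<n}"]) (auto simp: D_def)
    also have "\<dots> = (adj C * C) $$ (a,b)" using ab C by (intro adj_mult_index[symmetric]) auto
    finally show "(adj D * D) $$ (a,b) = 1\<^sub>m j $$ (a,b)" unfolding CC .
  qed (auto simp: D_def)
  hence "D * adj D = 1\<^sub>m j" by (rule mat_mult_left_right_inverse[OF adj_carrier[OF Dc] Dc])
  hence "(D * adj D) $$ (j-1, j-1) = 1" using nj by simp
  moreover have "\<not> (j - Suc 0 < n)" using nj by simp
  hence "(D * adj D) $$ (j-1, j-1) = 0"
    using nj by (simp add: D_def scalar_prod_def row_def col_def)
  ultimately show False by simp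
qed

definition range_in :: "complex mat \<Rightarrow> nat \<Rightarrow> complex vec set \<Rightarrow> bool" where
  "range_in C j S \<longleftrightarrow> (\<forall>x\<in>carrier_vec j. C *\<^sub>v x \<in> S)"

lemma subspace_lincomb:
  assumes "subspace_vec n S" "v \<in> S" "w \<in> S"
  shows "a \<cdot>\<^sub>v v + b \<cdot>\<^sub>v w \<in> S"
  using assms unfolding subspace_vec_def by blast

lemma subspace_minus:
  assumes S: "subspace_vec n S" and v: "v \<in> S" and w: "w \<in> S"
  shows "v - w \<in> S"
proof -
  have "v \<in> carrier_vec n" "w \<in> carrier_vec n" using S v w by (auto simp: subspace_vec_def)
  hence eq: "v - w = 1 \<cdot>\<^sub>v v + (-1) \<cdot>\<^sub>v w" by (intro eq_vecI) auto
  show ?thesis unfolding eq by (rule subspace_lincomb[OF S v w])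
qed

lemma vinner_normalize:
  assumes w: "w \<in> carrier_vec n" and nz: "w \<noteq> 0\<^sub>v n"
  shows "\<exists>c. vinner (c \<cdot>\<^sub>v w) (c \<cdot>\<^sub>v w) = 1"
proof -
  have "Re (vinner w w) \<noteq> 0"
    using vinner_self_eq_0[OF w] nz vinner_self_nonneg(2)[of w] by (auto simp: complex_eq_iff)
  define r where "r = sqrt (Re (vinner w w))"
  have r: "r > 0" "vinner w w = of_real (r\<^sup>2)"
    unfolding r_def using \<open>Re (vinner w w) \<noteq> 0\<close> vinner_self_nonneg[of w]
    by (auto simp: complex_eq_iff)
  have "vinner ((1 / of_real r) \<cdot>\<^sub>v w) ((1 / of_real r) \<cdot>\<^sub>v w) = (1 / of_real r)\<^sup>2 * vinner w w"
    using w by (simp add: vinner_def sum_distrib_left power2_eq_square algebra_simps)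
  thus ?thesis using r by (intro exI[of _ "1 / of_real r"]) (simp add: power2_eq_square)
qed

lemma orthogonal_unit_vector_exists:
  assumes S: "subspace_vec n S" and C: "C \<in> carrier_mat n j" and CC: "adj C * C = 1\<^sub>m j"
    and R: "range_in C j S" and v: "v \<in> S" and nv: "\<forall>x\<in>carrier_vec j. v \<noteq> C *\<^sub>v x"
  shows "\<exists>u\<in>S. adj C *\<^sub>v u = 0\<^sub>v j \<and> vinner u u = 1"
proof -
  have vc: "v \<in> carrier_vec n" using S v by (auto simp: subspace_vec_def)
  define y where "y = adj C *\<^sub>v v"
  have yc: "y \<in> carrier_vec j" unfolding y_def by (rule mult_mat_vec_carrier[OF adj_carrier[OF C] vc])
  have Cy: "C *\<^sub>v y \<in> carrier_vec n" using C yc by simp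
  define w where "w = v - C *\<^sub>v y"
  have wc: "w \<in> carrier_vec n" using Cy vc by (simp add: w_def)
  have wS: "w \<in> S" unfolding w_def using subspace_minus[OF S v] R yc by (simp add: range_in_def)
  have Cw: "adj C *\<^sub>v w = 0\<^sub>v j"
  proof -
    have "adj C *\<^sub>v w = adj C *\<^sub>v v - adj C *\<^sub>v (C *\<^sub>v y)"
      unfolding w_def by (rule mult_minus_distrib_mat_vec[OF adj_carrier[OF C] vc Cy])
    also have "adj C *\<^sub>v (C *\<^sub>v y) = (adj C * C) *\<^sub>v y"
      by (rule assoc_mult_mat_vec[symmetric, OF adj_carrier[OF C] C yc])
    also have "\<dots> = y" using CC yc by simp
    finally show ?thesis using yc by (simp add: y_def)
  qed
  have "w \<noteq> 0\<^sub>v n"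
  proof
    assume w0: "w = 0\<^sub>v n"
    have "v = C *\<^sub>v y"
    proof (rule eq_vecI)
      fix i assume "i < dim_vec (C *\<^sub>v y)"
      hence i: "i < n" using C by simp
      have "(v - C *\<^sub>v y) $ i = v $ i - (C *\<^sub>v y) $ i"
        using i C by (intro index_minus_vec(1)) auto
      thus "v $ i = (C *\<^sub>v y) $ i" using w0 i by (simp add: w_def)
    qed (use vc C in auto)
    thus False using nv yc by blast
  qed
  then obtain c where c: "vinner (c \<cdot>\<^sub>v w) (c \<cdot>\<^sub>v w) = 1"
    using vinner_normalize[OF wc] by blast
  have "c \<cdot>\<^sub>v w \<in> S" using S wS by (simp add: subspace_vec_def)
  moreover have "adj C *\<^sub>v (c \<cdot>\<^sub>v w) = 0\<^sub>v j"
    using Cw wc C by (simp add: mult_mat_vec[of _ j n]) (intro eq_vecI; simp)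
  ultimately show ?thesis using c by blast
qed

definition append_col :: "complex mat \<Rightarrow> complex vec \<Rightarrow> complex mat" where
  "append_col C u = mat (dim_row C) (Suc (dim_col C)) (\<lambda>(i,c). if c < dim_col C then C $$ (i,c) else u $ i)"

lemma append_col_carrier: "C \<in> carrier_mat n j \<Longrightarrow> append_col C u \<in> carrier_mat n (Suc j)"
  by (simp add: append_col_def)

lemma append_col_isometry:
  assumes C: "C \<in> carrier_mat n j" and CC: "adj C * C = 1\<^sub>m j"
    and u: "u \<in> carrier_vec n" and Cu: "adj C *\<^sub>v u = 0\<^sub>v j" and uu: "vinner u u = 1"
  shows "adj (append_col C u) * append_col C u = 1\<^sub>m (Suc j)"
proof (rule eq_matI)
  let ?C = "append_col C u"
  have orth: "(\<Sum>i<n. cnj (C $$ (i,c)) * u $ i) = 0" if "c < j" for c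
    using arg_cong[OF Cu, of "\<lambda>x. x $ c"] C u that
    by (simp add: scalar_prod_def row_def atLeast0LessThan)
  fix a b assume "a < dim_row (1\<^sub>m (Suc j))" "b < dim_col (1\<^sub>m (Suc j))"
  hence a: "a < Suc j" and b: "b < Suc j" by auto
  have "(adj ?C * ?C) $$ (a,b) = (\<Sum>i<n. cnj (?C $$ (i,a)) * ?C $$ (i,b))"
    using a b append_col_carrier[OF C] by (intro adj_mult_index) auto
  also have "\<dots> = 1\<^sub>m (Suc j) $$ (a,b)"
  proof (cases "a < j"; cases "b < j")
    assume "a < j" "b < j"
    thus ?thesis using C CC adj_mult_index[OF C C, of a b]
      by (simp add: append_col_def)
  next
    assume "a < j" "\<not> b < j"
    thus ?thesis using C b orth[of a] by (simp add: append_col_def)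
  next
    assume "\<not> a < j" "b < j"
    hence "(\<Sum>i<n. cnj (?C $$ (i,a)) * ?C $$ (i,b)) = cnj (\<Sum>i<n. cnj (C $$ (i,b)) * u $ i)"
      using C a by (simp add: append_col_def mult.commute)
    thus ?thesis using orth[of b] \<open>b < j\<close> \<open>\<not> a < j\<close> a by simp
  next
    assume "\<not> a < j" "\<not> b < j"
    thus ?thesis using C u a b uu by (simp add: append_col_def vinner_def)
  qed
  finally show "(adj ?C * ?C) $$ (a,b) = 1\<^sub>m (Suc j) $$ (a,b)" .
qed (use C in \<open>auto simp: append_col_def\<close>)

lemma append_col_mult_vec:
  assumes C: "C \<in> carrier_mat n j" and u: "u \<in> carrier_vec n" and x: "x \<in> carrier_vec (Suc j)"
  shows "append_col C u *\<^sub>v x = C *\<^sub>v vec j (\<lambda>c. x $ c) + (x $ j) \<cdot>\<^sub>v u"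
proof (rule eq_vecI)
  fix i assume "i < dim_vec (C *\<^sub>v vec j (\<lambda>c. x $ c) + (x $ j) \<cdot>\<^sub>v u)"
  hence i: "i < n" using u by simp
  have "(append_col C u *\<^sub>v x) $ i = (\<Sum>c<Suc j. append_col C u $$ (i,c) * x $ c)"
    using i x C by (simp add: append_col_def scalar_prod_def row_def atLeast0LessThan)
  also have "\<dots> = (\<Sum>c<j. C $$ (i,c) * x $ c) + u $ i * x $ j"
    using i C by (simp add: append_col_def)
  finally show "(append_col C u *\<^sub>v x) $ i = (C *\<^sub>v vec j (\<lambda>c. x $ c) + (x $ j) \<cdot>\<^sub>v u) $ i"
    using i u C by (simp add: scalar_prod_def row_def atLeast0LessThan mult.commute)
qed (use C u in \<open>auto simp: append_col_def\<close>)

lemma isometry_extend_in_subspace: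
  assumes S: "subspace_vec n S" and C: "C \<in> carrier_mat n j" and CC: "adj C * C = 1\<^sub>m j"
    and R: "range_in C j S" and v: "v \<in> S" and nv: "\<forall>x\<in>carrier_vec j. v \<noteq> C *\<^sub>v x"
  shows "\<exists>C'. C' \<in> carrier_mat n (Suc j) \<and> adj C' * C' = 1\<^sub>m (Suc j) \<and> range_in C' (Suc j) S"
proof -
  obtain u where uS: "u \<in> S" and Cu: "adj C *\<^sub>v u = 0\<^sub>v j" and uu: "vinner u u = 1"
    using orthogonal_unit_vector_exists[OF assms] by blast
  have u: "u \<in> carrier_vec n" using S uS by (auto simp: subspace_vec_def)
  have "range_in (append_col C u) (Suc j) S"
    unfolding range_in_def
  proof
    fix x :: "complex vec" assume x: "x \<in> carrier_vec (Suc j)"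
    have "C *\<^sub>v vec j (\<lambda>c. x $ c) \<in> S" using R by (simp add: range_in_def)
    thus "append_col C u *\<^sub>v x \<in> S"
      using subspace_lincomb[OF S _ uS, of _ 1 "x $ j"] append_col_mult_vec[OF C u x] S
      by (simp add: subspace_vec_def)
  qed
  thus ?thesis using append_col_carrier[OF C] append_col_isometry[OF C CC u Cu uu] by blast
qed

lemma subspace_isometric_basis:
  assumes S: "subspace_vec n S"
  shows "\<exists>j C. C \<in> carrier_mat n j \<and> adj C * C = 1\<^sub>m j \<and> range_in C j S \<and> j \<le> n \<and>
     (\<forall>v\<in>S. \<exists>x\<in>carrier_vec j. v = C *\<^sub>v x)"
proof -
  define Q where "Q = {j. \<exists>C. C \<in> carrier_mat n j \<and> adj C * C = 1\<^sub>m j \<and> range_in C j S}"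
  have Qb: "Q \<subseteq> {..n}" unfolding Q_def using isometry_dim_le by auto
  have "0 \<in> Q" unfolding Q_def range_in_def
  proof (intro CollectI exI conjI ballI)
    fix x :: "complex vec" assume "x \<in> carrier_vec 0"
    hence "0\<^sub>m n 0 *\<^sub>v x = 0\<^sub>v n" by (intro eq_vecI) (auto simp: scalar_prod_def)
    thus "0\<^sub>m n 0 *\<^sub>v x \<in> S" using S by (simp add: subspace_vec_def)
  qed (auto intro: eq_matI)
  hence Qne: "Q \<noteq> {}" by blast
  have finQ: "finite Q" using Qb finite_subset by blast
  define j where "j = Max Q"
  have jQ: "j \<in> Q" unfolding j_def using finQ Qne by (rule Max_in)
  then obtain C where C: "C \<in> carrier_mat n j" "adj C * C = 1\<^sub>m j" "range_in C j S" unfolding Q_def by blast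
  have "\<forall>v\<in>S. \<exists>x\<in>carrier_vec j. v = C *\<^sub>v x"
  proof (rule ccontr)
    assume "\<not> (\<forall>v\<in>S. \<exists>x\<in>carrier_vec j. v = C *\<^sub>v x)"
    then obtain v where "v \<in> S" "\<forall>x\<in>carrier_vec j. v \<noteq> C *\<^sub>v x" by blast
    from isometry_extend_in_subspace[OF S C this] have "Suc j \<in> Q" unfolding Q_def by blast
    hence "Suc j \<le> j" unfolding j_def by (rule Max_ge[OF finQ])
    thus False by simp
  qed
  moreover have "j \<le> n" using jQ Qb by auto
  ultimately show ?thesis using C by blast
qed

lemma subspace_kernel:
  assumes A: "A \<in> carrier_mat k p"
  shows "subspace_vec p {v \<in> carrier_vec p. A *\<^sub>v v = 0\<^sub>v k}"
  unfolding subspace_vec_def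
proof (intro conjI ballI allI)
  show "0\<^sub>v p \<in> {v \<in> carrier_vec p. A *\<^sub>v v = 0\<^sub>v k}"
    using A by (auto intro!: eq_vecI simp: scalar_prod_def)
next
  fix x y assume "x \<in> {v \<in> carrier_vec p. A *\<^sub>v v = 0\<^sub>v k}" "y \<in> {v \<in> carrier_vec p. A *\<^sub>v v = 0\<^sub>v k}"
  thus "x + y \<in> {v \<in> carrier_vec p. A *\<^sub>v v = 0\<^sub>v k}"
    using mult_add_distrib_mat_vec[OF A] by auto
next
  fix c x assume "x \<in> {v \<in> carrier_vec p. A *\<^sub>v v = 0\<^sub>v k}"
  thus "c \<cdot>\<^sub>v x \<in> {v \<in> carrier_vec p. A *\<^sub>v v = 0\<^sub>v k}"
    using mult_mat_vec[OF A] by (auto intro!: eq_vecI)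
qed auto

lemma adj_mult_eq_0_of_range_in_kernel:
  assumes B: "B \<in> carrier_mat p k" and B': "B' \<in> carrier_mat p k'"
    and R: "range_in B' k' {v \<in> carrier_vec p. adj B *\<^sub>v v = 0\<^sub>v k}"
  shows "adj B * B' = 0\<^sub>m k k'"
proof (rule eq_mat_by_mult_vec[OF mult_carrier_mat[OF adj_carrier[OF B] B'] zero_carrier_mat])
  fix x :: "complex vec" assume x: "x \<in> carrier_vec k'"
  have "(adj B * B') *\<^sub>v x = adj B *\<^sub>v (B' *\<^sub>v x)" by (rule assoc_mult_mat_vec[OF adj_carrier[OF B] B' x])
  also have "\<dots> = 0\<^sub>v k" using R x by (simp add: range_in_def)
  finally show "(adj B * B') *\<^sub>v x = 0\<^sub>m k k' *\<^sub>v x" using x by (auto intro!: eq_vecI simp: scalar_prod_def)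
qed

lemma isometry_complement_decomp:
  assumes B: "B \<in> carrier_mat p k" and BB: "adj B * B = 1\<^sub>m k"
    and B': "B' \<in> carrier_mat p k'" and B'B': "adj B' * B' = 1\<^sub>m k'"
    and R: "range_in B' k' {v \<in> carrier_vec p. adj B *\<^sub>v v = 0\<^sub>v k}"
    and span: "\<forall>v\<in>{v \<in> carrier_vec p. adj B *\<^sub>v v = 0\<^sub>v k}. \<exists>x\<in>carrier_vec k'. v = B' *\<^sub>v x"
  shows "B * adj B + B' * adj B' = 1\<^sub>m p"
proof -
  have aB: "adj B \<in> carrier_mat k p" and aB': "adj B' \<in> carrier_mat k' p" using B B' by auto
  have "adj B * B' = 0\<^sub>m k k'" by (rule adj_mult_eq_0_of_range_in_kernel[OF B B' R])
  hence B'B: "adj B' * B = 0\<^sub>m k' k" using adj_mult[OF aB B'] by simp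
  show ?thesis
  proof (rule eq_mat_by_mult_vec[OF add_carrier_mat[OF mult_carrier_mat[OF B' aB']] one_carrier_mat])
    fix v :: "complex vec" assume v: "v \<in> carrier_vec p"
    define u where "u = B *\<^sub>v (adj B *\<^sub>v v)"
    have u: "u \<in> carrier_vec p" unfolding u_def by (rule mult_mat_vec_carrier[OF B mult_mat_vec_carrier[OF aB v]])
    define w where "w = v - u"
    have w: "w \<in> carrier_vec p" and vuw: "v = u + w" using v u by (auto simp: w_def intro!: eq_vecI)
    have "adj B *\<^sub>v w = adj B *\<^sub>v v - adj B *\<^sub>v u"
      unfolding w_def by (rule mult_minus_distrib_mat_vec[OF aB v u])
    also have "adj B *\<^sub>v u = (adj B * B) *\<^sub>v (adj B *\<^sub>v v)"
      unfolding u_def by (rule assoc_mult_mat_vec[symmetric, OF aB B mult_mat_vec_carrier[OF aB v]])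
    also have "\<dots> = adj B *\<^sub>v v" unfolding BB using aB v by simp
    finally have "adj B *\<^sub>v w = 0\<^sub>v k" using aB v by simp
    then obtain z where z: "z \<in> carrier_vec k'" "w = B' *\<^sub>v z" using span w by blast
    have "adj B' *\<^sub>v u = (adj B' * B) *\<^sub>v (adj B *\<^sub>v v)"
      unfolding u_def by (rule assoc_mult_mat_vec[symmetric, OF aB' B mult_mat_vec_carrier[OF aB v]])
    also have "\<dots> = 0\<^sub>v k'" unfolding B'B using aB v by (intro eq_vecI) (auto simp: scalar_prod_def)
    finally have u0: "adj B' *\<^sub>v u = 0\<^sub>v k'" .
    have "adj B' *\<^sub>v w = (adj B' * B') *\<^sub>v z"
      unfolding z(2) by (rule assoc_mult_mat_vec[symmetric, OF aB' B' z(1)])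
    also have "\<dots> = z" unfolding B'B' using z(1) by simp
    finally have "adj B' *\<^sub>v w = z" .
    moreover have "adj B' *\<^sub>v v = adj B' *\<^sub>v u + adj B' *\<^sub>v w"
      unfolding vuw by (rule mult_add_distrib_mat_vec[OF aB' u w])
    ultimately have "B' *\<^sub>v (adj B' *\<^sub>v v) = w" using u0 aB' w z by simp
    moreover have "(B * adj B + B' * adj B') *\<^sub>v v = B *\<^sub>v (adj B *\<^sub>v v) + B' *\<^sub>v (adj B' *\<^sub>v v)"
      using add_mult_distrib_mat_vec[OF mult_carrier_mat[OF B aB] mult_carrier_mat[OF B' aB'] v]
        assoc_mult_mat_vec[OF B aB v] assoc_mult_mat_vec[OF B' aB' v] by simp
    ultimately have "(B * adj B + B' * adj B') *\<^sub>v v = u + w" by (simp add: u_def)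
    thus "(B * adj B + B' * adj B') *\<^sub>v v = 1\<^sub>m p *\<^sub>v v" using v by (simp add: vuw[symmetric])
  qed
qed

lemma isometric_basis_dim_proper:
  assumes S: "subspace_vec k S" and nt: "\<not> (S = {0\<^sub>v k} \<or> S = carrier_vec k)"
    and C: "C \<in> carrier_mat k j" and CC: "adj C * C = 1\<^sub>m j" and R: "range_in C j S"
    and span: "\<forall>v\<in>S. \<exists>x\<in>carrier_vec j. v = C *\<^sub>v x"
  shows "0 < j" "j < k"
proof -
  have S0: "0\<^sub>v k \<in> S" and Sc: "S \<subseteq> carrier_vec k" using S by (auto simp: subspace_vec_def)
  obtain v where v: "v \<in> S" "v \<noteq> 0\<^sub>v k" using nt S0 by blast
  then obtain x where x: "x \<in> carrier_vec j" "v = C *\<^sub>v x" using span by blast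
  show "0 < j"
  proof (rule ccontr)
    assume "\<not> 0 < j"
    hence "C *\<^sub>v x = 0\<^sub>v k" using C x(1) by (intro eq_vecI) (auto simp: scalar_prod_def)
    thus False using v x by simp
  qed
  show "j < k"
  proof (rule ccontr)
    assume "\<not> j < k"
    hence jk: "j = k" using isometry_dim_le[OF C CC] by simp
    have Ck: "C \<in> carrier_mat k k" using C jk by simp
    have CC': "C * adj C = 1\<^sub>m k" using mat_mult_left_right_inverse[OF adj_carrier[OF Ck] Ck] CC jk by simp
    have "carrier_vec k \<subseteq> S"
    proof
      fix w :: "complex vec" assume w: "w \<in> carrier_vec k"
      have "w = (C * adj C) *\<^sub>v w" unfolding CC' using w by simp
      also have "\<dots> = C *\<^sub>v (adj C *\<^sub>v w)" by (rule assoc_mult_mat_vec[OF Ck adj_carrier[OF Ck] w])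
      finally show "w \<in> S" using R jk w Ck unfolding range_in_def by (metis adj_carrier mult_mat_vec_carrier)
    qed
    thus False using nt Sc by blast
  qed
qed

lemma block_index_less: fixes w a q M :: nat assumes "w < q" "a < M" shows "w * M + a < q * M"
proof -
  have "w * M + a < Suc w * M" using assms(2) by simp
  also have "\<dots> \<le> q * M" using assms(1) by (intro mult_le_mono1) simp
  finally show ?thesis .
qed

lemma tensor_id_mult_block_index:
  assumes A: "A \<in> carrier_mat q q" and X: "X \<in> carrier_mat (q*M) c"
    and w: "w < q" and a: "a < M" and j: "j < c"
  shows "(tensor_id A M * X) $$ (w*M + a, j) = (\<Sum>r<q. A $$ (w, r) * X $$ (r*M + a, j))"
  using tensor_id_mult_index[OF A X block_index_less[OF w a] j] a by simp

lemma block_rows_intertwine: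
  assumes A: "A \<in> carrier_mat q q" and B: "B \<in> carrier_mat p p"
    and S: "S \<in> carrier_mat (q*M) p" and X: "X \<in> carrier_mat (q*M') p"
    and inter: "tensor_id A M' * X = X * B"
    and a: "a < M" and a': "a' < M'"
    and rows: "\<And>r l. r < q \<Longrightarrow> l < p \<Longrightarrow> S $$ (r*M + a, l) = X $$ (r*M' + a', l)"
    and w: "w < q" and j: "j < p"
  shows "(tensor_id A M * S) $$ (w*M + a, j) = (S * B) $$ (w*M + a, j)"
proof -
  have "(tensor_id A M * S) $$ (w*M + a, j) = (\<Sum>r<q. A $$ (w, r) * X $$ (r*M' + a', j))"
    using tensor_id_mult_block_index[OF A S w a j] rows j by simp
  also have "\<dots> = (X * B) $$ (w*M' + a', j)"
    unfolding inter[symmetric] by (rule tensor_id_mult_block_index[OF A X w a' j, symmetric])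
  also have "\<dots> = (\<Sum>l<p. S $$ (w*M + a, l) * B $$ (l, j))"
    using X B j block_index_less[OF w a'] rows[OF w]
    by (simp add: scalar_prod_def row_def col_def atLeast0LessThan)
  also have "\<dots> = (S * B) $$ (w*M + a, j)"
    using S B j block_index_less[OF w a] by (simp add: scalar_prod_def row_def col_def atLeast0LessThan)
  finally show ?thesis .
qed

text \<open>Rows of a map into \<open>\<complex>\<^sup>q \<otimes> \<complex>\<^sup>M\<close> are indexed by \<open>w * M + a\<close> (\<open>w < q\<close>, \<open>a < M\<close>). The stack of
  maps \<open>J\<^sub>a\<close> into \<open>\<complex>\<^sup>q \<otimes> \<complex>\<^sup>M\<^sup>a\<close> and \<open>J\<^sub>b\<close> into \<open>\<complex>\<^sup>q \<otimes> \<complex>\<^sup>M\<^sup>b\<close> is the map into \<open>\<complex>\<^sup>q \<otimes> (\<complex>\<^sup>M\<^sup>a \<oplus> \<complex>\<^sup>M\<^sup>b)\<close> with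
  both as components.\<close>

definition tensor_stack :: "nat \<Rightarrow> nat \<Rightarrow> nat \<Rightarrow> complex mat \<Rightarrow> complex mat \<Rightarrow> complex mat" where
  "tensor_stack q Ma Mb Ja Jb = mat (q*(Ma+Mb)) (dim_col Ja) (\<lambda>(i,j).
     if i mod (Ma+Mb) < Ma then Ja $$ ((i div (Ma+Mb))*Ma + i mod (Ma+Mb), j)
     else Jb $$ ((i div (Ma+Mb))*Mb + (i mod (Ma+Mb) - Ma), j))"

lemma tensor_stack_carrier: "Ja \<in> carrier_mat (q*Ma) p \<Longrightarrow> tensor_stack q Ma Mb Ja Jb \<in> carrier_mat (q*(Ma+Mb)) p"
  by (simp add: tensor_stack_def)

lemma tensor_stack_index_left: assumes "w < q" "a < Ma" "j < dim_col Ja"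
  shows "tensor_stack q Ma Mb Ja Jb $$ (w*(Ma+Mb) + a, j) = Ja $$ (w*Ma + a, j)"
  using assms block_index_less[OF assms(1), of a "Ma+Mb"] by (simp add: tensor_stack_def)

lemma tensor_stack_index_right: assumes "w < q" "b < Mb" "j < dim_col Ja"
  shows "tensor_stack q Ma Mb Ja Jb $$ (w*(Ma+Mb) + (Ma + b), j) = Jb $$ (w*Mb + b, j)"
  using assms block_index_less[OF assms(1), of "Ma + b" "Ma+Mb"] by (simp add: tensor_stack_def)

lemma adj_tensor_stack_mult:
  assumes Ja: "Ja \<in> carrier_mat (q*Ma) p" and Jb: "Jb \<in> carrier_mat (q*Mb) p"
  shows "adj (tensor_stack q Ma Mb Ja Jb) * tensor_stack q Ma Mb Ja Jb = adj Ja * Ja + adj Jb * Jb"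
proof (rule eq_matI)
  let ?S = "tensor_stack q Ma Mb Ja Jb"
  fix j j' assume "j < dim_row (adj Ja * Ja + adj Jb * Jb)" "j' < dim_col (adj Ja * Ja + adj Jb * Jb)"
  hence j: "j < p" and j': "j' < p" using Ja Jb by auto
  have S: "?S \<in> carrier_mat (q*(Ma+Mb)) p" by (rule tensor_stack_carrier[OF Ja])
  have "(adj ?S * ?S) $$ (j,j') = (\<Sum>i<q*(Ma+Mb). cnj (?S $$ (i,j)) * ?S $$ (i,j'))"
    by (rule adj_mult_index[OF S S j j'])
  also have "\<dots> = (\<Sum>w<q. \<Sum>a<Ma+Mb. cnj (?S $$ (w*(Ma+Mb)+a,j)) * ?S $$ (w*(Ma+Mb)+a,j'))"
    by (rule sum_lessThan_mult_split)
  also have "\<dots> = (\<Sum>w<q. (\<Sum>a<Ma. cnj (Ja $$ (w*Ma+a,j)) * Ja $$ (w*Ma+a,j'))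
                       + (\<Sum>b<Mb. cnj (Jb $$ (w*Mb+b,j)) * Jb $$ (w*Mb+b,j')))"
    unfolding sum_lessThan_add_split using j j' Ja
    by (intro sum.cong refl) (simp add: tensor_stack_index_left tensor_stack_index_right)
  also have "\<dots> = (\<Sum>i<q*Ma. cnj (Ja $$ (i,j)) * Ja $$ (i,j')) + (\<Sum>i<q*Mb. cnj (Jb $$ (i,j)) * Jb $$ (i,j'))"
    by (simp add: sum.distrib sum_lessThan_mult_split)
  also have "\<dots> = (adj Ja * Ja) $$ (j,j') + (adj Jb * Jb) $$ (j,j')"
    using adj_mult_index[OF Ja Ja j j'] adj_mult_index[OF Jb Jb j j'] by simp
  finally show "(adj ?S * ?S) $$ (j,j') = (adj Ja * Ja + adj Jb * Jb) $$ (j,j')"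
    using Ja Jb j j' by simp
qed (use Ja Jb in \<open>auto simp: tensor_stack_def\<close>)

lemma tensor_stack_intertwines:
  assumes Ja: "Ja \<in> carrier_mat (q*Ma) p" and Jb: "Jb \<in> carrier_mat (q*Mb) p"
    and A: "A \<in> carrier_mat q q" and B: "B \<in> carrier_mat p p"
    and inter_a: "tensor_id A Ma * Ja = Ja * B" and inter_b: "tensor_id A Mb * Jb = Jb * B"
  shows "tensor_id A (Ma+Mb) * tensor_stack q Ma Mb Ja Jb = tensor_stack q Ma Mb Ja Jb * B"
proof (rule eq_matI)
  let ?S = "tensor_stack q Ma Mb Ja Jb"
  have S: "?S \<in> carrier_mat (q*(Ma+Mb)) p" by (rule tensor_stack_carrier[OF Ja])
  fix i j assume "i < dim_row (?S * B)" "j < dim_col (?S * B)"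
  hence i: "i < q * (Ma+Mb)" and j: "j < p" using S B by auto
  define w a where "w = i div (Ma+Mb)" and "a = i mod (Ma+Mb)"
  have "Ma + Mb > 0" using i by (cases "Ma + Mb") auto
  hence w: "w < q" and a: "a < Ma+Mb"
    using i by (auto simp: w_def a_def less_mult_imp_div_less)
  have i_eq: "i = w * (Ma+Mb) + a" unfolding w_def a_def by (rule div_mult_mod_eq[symmetric])
  show "(tensor_id A (Ma+Mb) * ?S) $$ (i,j) = (?S * B) $$ (i,j)"
  proof (cases "a < Ma")
    case True
    show ?thesis unfolding i_eq using Ja True
      by (intro block_rows_intertwine[OF A B S Ja inter_a a True] w j) (simp add: tensor_stack_index_left)
  next
    case False
    define b where "b = a - Ma"
    have b: "b < Mb" and ab: "a = Ma + b" using False a by (auto simp: b_def)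
    show ?thesis unfolding i_eq ab using b carrier_matD[OF Ja]
      by (intro block_rows_intertwine[OF A B S Jb inter_b _ b] w j) (simp_all add: tensor_stack_index_right)
  qed
qed (use Ja B A in \<open>auto simp: tensor_stack_def\<close>)

section \<open>Characters and intertwiners\<close>

lemma eigenvector_exists: assumes X: "(X :: complex mat) \<in> carrier_mat k k" and k: "k > 0"
  shows "\<exists>lam v. v \<in> carrier_vec k \<and> v \<noteq> 0\<^sub>v k \<and> X *\<^sub>v v = lam \<cdot>\<^sub>v v"
proof -
  obtain as where cp: "char_poly X = (\<Prod>a\<leftarrow>as. [:- a, 1:])" and len: "length as = k"
    using char_poly_factorized[OF X] by blast
  then obtain lam rest where "as = lam # rest" using k by (cases as) auto
  hence "poly (char_poly X) lam = 0" unfolding cp by simp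
  hence "eigenvalue X lam" using eigenvalue_root_char_poly[OF X] by simp
  then obtain v where "eigenvector X v lam" unfolding eigenvalue_def by blast
  thus ?thesis using X unfolding eigenvector_def by auto
qed

lemma sum4_norm_sq_eq_0:
  fixes z :: "nat \<Rightarrow> nat \<Rightarrow> nat \<Rightarrow> nat \<Rightarrow> complex"
  assumes "(\<Sum>k<q. \<Sum>l<p. \<Sum>i<q'. \<Sum>j<p'. (cmod (z k l i j))\<^sup>2) = 0"
    and "k < q" "l < p" "i < q'" "j < p'"
  shows "z k l i j = 0"
proof -
  have nn: "\<And>k l i. 0 \<le> (\<Sum>j<p'. (cmod (z k l i j))\<^sup>2)" "\<And>k l. 0 \<le> (\<Sum>i<q'. \<Sum>j<p'. (cmod (z k l i j))\<^sup>2)"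
     "\<And>k. 0 \<le> (\<Sum>l<p. \<Sum>i<q'. \<Sum>j<p'. (cmod (z k l i j))\<^sup>2)"
    by (auto intro!: sum_nonneg)
  from assms have "(\<Sum>l<p. \<Sum>i<q'. \<Sum>j<p'. (cmod (z k l i j))\<^sup>2) = 0"
    using nn by (subst (asm) sum_nonneg_eq_0_iff) auto
  hence "(\<Sum>i<q'. \<Sum>j<p'. (cmod (z k l i j))\<^sup>2) = 0"
    using assms nn by (subst (asm) sum_nonneg_eq_0_iff) auto
  hence "(\<Sum>j<p'. (cmod (z k l i j))\<^sup>2) = 0"
    using assms nn by (subst (asm) sum_nonneg_eq_0_iff) auto
  hence "(cmod (z k l i j))\<^sup>2 = 0"
    using assms by (subst (asm) sum_nonneg_eq_0_iff) auto
  thus ?thesis by simp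
qed

lemma subspace_eigenspace:
  assumes X: "X \<in> carrier_mat k k"
  shows "subspace_vec k {w \<in> carrier_vec k. X *\<^sub>v w = lam \<cdot>\<^sub>v w}"
  unfolding subspace_vec_def
proof (intro conjI ballI allI)
  show "0\<^sub>v k \<in> {w \<in> carrier_vec k. X *\<^sub>v w = lam \<cdot>\<^sub>v w}"
    using X by (auto intro!: eq_vecI simp: scalar_prod_def)
next
  fix x y assume x: "x \<in> {w \<in> carrier_vec k. X *\<^sub>v w = lam \<cdot>\<^sub>v w}"
    and y: "y \<in> {w \<in> carrier_vec k. X *\<^sub>v w = lam \<cdot>\<^sub>v w}"
  have "X *\<^sub>v (x + y) = lam \<cdot>\<^sub>v (x + y)"
    using x y mult_add_distrib_mat_vec[OF X] by (auto simp: smult_add_distrib_vec)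
  thus "x + y \<in> {w \<in> carrier_vec k. X *\<^sub>v w = lam \<cdot>\<^sub>v w}" using x y by simp
next
  fix c x assume x: "x \<in> {w \<in> carrier_vec k. X *\<^sub>v w = lam \<cdot>\<^sub>v w}"
  have "X *\<^sub>v (c \<cdot>\<^sub>v x) = lam \<cdot>\<^sub>v (c \<cdot>\<^sub>v x)"
    using x mult_mat_vec[OF X] by (simp add: smult_smult_assoc mult.commute)
  thus "c \<cdot>\<^sub>v x \<in> {w \<in> carrier_vec k. X *\<^sub>v w = lam \<cdot>\<^sub>v w}" using x by simp
qed auto

locale finite_group = group G for G :: "('g,'b) monoid_scheme" (structure) +
  assumes finite_carrier: "finite (carrier G)"
begin

lemma card_carrier_pos: "card (carrier G) > 0"
  using finite_carrier one_closed by (auto simp: card_gt_0_iff)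

lemma sum_carrier_reindex_mult: assumes c: "c \<in> carrier G"
  shows "(\<Sum>h\<in>carrier G. F (c \<otimes> h)) = (\<Sum>h\<in>carrier G. (F h :: 'z::comm_monoid_add))"
proof -
  have "(\<Sum>h\<in>(\<lambda>x. c \<otimes> x) ` carrier G. F h) = (\<Sum>h\<in>carrier G. F (c \<otimes> h))"
    by (rule sum.reindex[OF inj_on_cmult[OF c], unfolded comp_def])
  thus ?thesis using surj_const_mult[OF c] by simp
qed

lemma unitary_rep_carrier: "unitary_rep G p \<sigma> \<Longrightarrow> g \<in> carrier G \<Longrightarrow> \<sigma> g \<in> carrier_mat p p"
  by (simp add: unitary_rep_def rep_def)

lemma unitary_rep_mult: "unitary_rep G p \<sigma> \<Longrightarrow> g \<in> carrier G \<Longrightarrow> h \<in> carrier G \<Longrightarrow> \<sigma> (g \<otimes> h) = \<sigma> g * \<sigma> h"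
  by (simp add: unitary_rep_def rep_def)

lemma unitary_rep_one: "unitary_rep G p \<sigma> \<Longrightarrow> \<sigma> \<one> = 1\<^sub>m p"
  by (simp add: unitary_rep_def rep_def)

lemma unitary_rep_mult_inv: assumes s: "unitary_rep G p \<sigma>" and g: "g \<in> carrier G"
  shows "\<sigma> g * \<sigma> (inv g) = 1\<^sub>m p"
  using g unitary_rep_one[OF s] by (simp flip: unitary_rep_mult[OF s])

lemma unitary_rep_inv: assumes s: "unitary_rep G p \<sigma>" and g: "g \<in> carrier G"
  shows "\<sigma> (inv g) = adj (\<sigma> g)"
proof -
  have c: "\<sigma> g \<in> carrier_mat p p" "\<sigma> (inv g) \<in> carrier_mat p p" using unitary_rep_carrier[OF s] g by auto
  have "adj (\<sigma> g) = adj (\<sigma> g) * (\<sigma> g * \<sigma> (inv g))" using c by (simp add: unitary_rep_mult_inv[OF s g])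
  also have "\<dots> = (adj (\<sigma> g) * \<sigma> g) * \<sigma> (inv g)"
    by (rule assoc_mult_mat[symmetric, OF adj_carrier[OF c(1)] c(1) c(2)])
  finally show ?thesis using s g c left_mult_one_mat[OF c(2)] by (simp add: unitary_rep_def unitary_mat_def)
qed

lemma mtrace_adj_mult_unitary_rep:
  assumes s: "unitary_rep G p \<sigma>" and g: "g \<in> carrier G" and h: "h \<in> carrier G"
  shows "mtrace (adj (\<sigma> g) * \<sigma> h) = mtrace (\<sigma> (inv g \<otimes> h))"
    and "mtrace (adj (\<sigma> (inv g)) * \<sigma> (inv h)) = cnj (mtrace (\<sigma> (inv g \<otimes> h)))"
proof -
  show "mtrace (adj (\<sigma> g) * \<sigma> h) = mtrace (\<sigma> (inv g \<otimes> h))"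
    using g h by (simp add: unitary_rep_inv[OF s] unitary_rep_mult[OF s])
  have "mtrace (adj (\<sigma> (inv g)) * \<sigma> (inv h)) = mtrace (\<sigma> (inv h) * \<sigma> g)"
    using g h mtrace_mult_comm[OF unitary_rep_carrier[OF s g] unitary_rep_carrier[OF s inv_closed[OF h]]]
    by (simp add: unitary_rep_inv[OF s])
  also have "\<sigma> (inv h) * \<sigma> g = adj (\<sigma> (inv g \<otimes> h))"
  proof -
    have "adj (\<sigma> (inv g \<otimes> h)) = \<sigma> (inv (inv g \<otimes> h))"
      using g h by (intro unitary_rep_inv[OF s, symmetric]) auto
    also have "inv (inv g \<otimes> h) = inv h \<otimes> g" using g h by (simp add: inv_mult_group)
    finally show ?thesis using g h by (simp add: unitary_rep_mult[OF s])
  qed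
  finally show "mtrace (adj (\<sigma> (inv g)) * \<sigma> (inv h)) = cnj (mtrace (\<sigma> (inv g \<otimes> h)))"
    using g h by (simp add: mtrace_adj[OF unitary_rep_carrier[OF s]])
qed

text \<open>\<open>twirl \<tau> \<sigma> k l i j\<close> is the \<open>(i, j)\<close> entry of \<open>\<Sum>\<^sub>g \<tau>(g) E\<^sub>k\<^sub>l \<sigma>(g)\<^sup>-\<^sup>1\<close>, the group average of
  the matrix unit \<open>E\<^sub>k\<^sub>l\<close>; every such average intertwines \<open>\<sigma>\<close> with \<open>\<tau>\<close>.\<close>

definition twirl :: "('g \<Rightarrow> complex mat) \<Rightarrow> ('g \<Rightarrow> complex mat) \<Rightarrow> nat \<Rightarrow> nat \<Rightarrow> nat \<Rightarrow> nat \<Rightarrow> complex" where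
  "twirl \<tau> \<sigma> k l i j = (\<Sum>g\<in>carrier G. \<tau> g $$ (i,k) * \<sigma> (inv g) $$ (l,j))"

lemma sum_norm_sq_twirl:
  assumes t: "unitary_rep G q \<tau>" and s: "unitary_rep G p \<sigma>"
  shows "(\<Sum>k<q. \<Sum>l<p. \<Sum>i<q. \<Sum>j<p. cnj (twirl \<tau> \<sigma> k l i j) * twirl \<tau> \<sigma> k l i j)
       = of_nat (card (carrier G)) * (\<Sum>u\<in>carrier G. mtrace (\<tau> u) * cnj (mtrace (\<sigma> u)))"
proof -
  define F where "F u = mtrace (\<tau> u) * cnj (mtrace (\<sigma> u))" for u
  define c where "c g h k l i j = (cnj (\<tau> g $$ (i,k)) * \<tau> h $$ (i,k)) * (cnj (\<sigma> (inv g) $$ (l,j)) * \<sigma> (inv h) $$ (l,j))"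
    for g h k l i j
  have expand: "cnj (twirl \<tau> \<sigma> k l i j) * twirl \<tau> \<sigma> k l i j = (\<Sum>g\<in>carrier G. \<Sum>h\<in>carrier G. c g h k l i j)"
    for k l i j
    unfolding twirl_def cnj_sum sum_product c_def by (simp add: algebra_simps)
  have pair: "(\<Sum>k<q. \<Sum>l<p. \<Sum>i<q. \<Sum>j<p. c g h k l i j) = F (inv g \<otimes> h)"
    if g: "g \<in> carrier G" and h: "h \<in> carrier G" for g h
  proof -
    have "(\<Sum>k<q. \<Sum>l<p. \<Sum>i<q. \<Sum>j<p. c g h k l i j)
        = (\<Sum>k<q. \<Sum>i<q. cnj (\<tau> g $$ (i,k)) * \<tau> h $$ (i,k))
          * (\<Sum>l<p. \<Sum>j<p. cnj (\<sigma> (inv g) $$ (l,j)) * \<sigma> (inv h) $$ (l,j))"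
      unfolding c_def sum_product by simp
    also have "(\<Sum>k<q. \<Sum>i<q. cnj (\<tau> g $$ (i,k)) * \<tau> h $$ (i,k)) = mtrace (adj (\<tau> g) * \<tau> h)"
      using g h unitary_rep_carrier[OF t] by (intro mtrace_adj_mult[symmetric]) auto
    also have "(\<Sum>l<p. \<Sum>j<p. cnj (\<sigma> (inv g) $$ (l,j)) * \<sigma> (inv h) $$ (l,j))
        = mtrace (adj (\<sigma> (inv g)) * \<sigma> (inv h))"
      using g h unitary_rep_carrier[OF s] by (subst sum.swap) (intro mtrace_adj_mult[symmetric]; auto)
    finally show ?thesis
      using g h by (simp only: mtrace_adj_mult_unitary_rep(1)[OF t g h] mtrace_adj_mult_unitary_rep(2)[OF s g h] F_def)
  qed
  have "(\<Sum>k<q. \<Sum>l<p. \<Sum>i<q. \<Sum>j<p. cnj (twirl \<tau> \<sigma> k l i j) * twirl \<tau> \<sigma> k l i j)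
      = (\<Sum>g\<in>carrier G. \<Sum>h\<in>carrier G. \<Sum>k<q. \<Sum>l<p. \<Sum>i<q. \<Sum>j<p. c g h k l i j)"
    unfolding expand
    by (simp only: sum.swap[of _ "{..<p}" "carrier G"] sum.swap[of _ "{..<q}" "carrier G"])
  also have "\<dots> = (\<Sum>g\<in>carrier G. \<Sum>h\<in>carrier G. F (inv g \<otimes> h))"
    using pair by simp
  also have "\<dots> = (\<Sum>g\<in>carrier G. \<Sum>h\<in>carrier G. F h)"
    by (intro sum.cong refl sum_carrier_reindex_mult) auto
  finally show ?thesis unfolding F_def by simp
qed

lemma char_inner_twirl:
  assumes s: "unitary_rep G p \<sigma>" and r: "unitary_rep G k \<rho>"
  shows "Re (char_inner G (character G \<rho>) (character G \<sigma>))
       = (\<Sum>a<p. \<Sum>b<k. \<Sum>i<p. \<Sum>j<k. (cmod (twirl \<sigma> \<rho> a b i j))\<^sup>2) / (real (card (carrier G)))\<^sup>2"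
proof -
  define R where "R = (\<Sum>a<p. \<Sum>b<k. \<Sum>i<p. \<Sum>j<k. (cmod (twirl \<sigma> \<rho> a b i j))\<^sup>2)"
  have "of_nat (card (carrier G)) * (\<Sum>u\<in>carrier G. mtrace (\<sigma> u) * cnj (mtrace (\<rho> u))) = of_real R"
    unfolding sum_norm_sq_twirl[OF s r, symmetric] R_def by (simp add: sum_cnj_mult_self of_real_sum)
  hence "(\<Sum>u\<in>carrier G. mtrace (\<sigma> u) * cnj (mtrace (\<rho> u))) = of_real R / of_nat (card (carrier G))"
    using card_carrier_pos by (simp add: field_simps)
  moreover have "char_inner G (character G \<rho>) (character G \<sigma>) =
     cnj (\<Sum>u\<in>carrier G. mtrace (\<sigma> u) * cnj (mtrace (\<rho> u))) / of_nat (card (carrier G))"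
    unfolding char_inner_def character_def by (simp add: mult.commute)
  ultimately show ?thesis unfolding R_def[symmetric] by (simp add: power2_eq_square)
qed

lemma sum_conj_urep_twirl:
  assumes s: "unitary_rep G p \<sigma>" and r: "unitary_rep G k \<rho>"
    and B: "B \<in> carrier_mat p k" and i: "i < p" and j: "j < k"
  shows "(\<Sum>g\<in>carrier G. (\<sigma> g * B * \<rho> (inv g)) $$ (i,j)) = (\<Sum>a<p. \<Sum>b<k. B $$ (a,b) * twirl \<sigma> \<rho> a b i j)"
proof -
  have "(\<sigma> g * B * \<rho> (inv g)) $$ (i,j) = (\<Sum>a<p. \<Sum>b<k. \<sigma> g $$ (i,a) * B $$ (a,b) * \<rho> (inv g) $$ (b,j))"
    if g: "g \<in> carrier G" for g
  proof -
    have sg: "\<sigma> g \<in> carrier_mat p p" and rg: "\<rho> (inv g) \<in> carrier_mat k k"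
      using g unitary_rep_carrier[OF s] unitary_rep_carrier[OF r] by auto
    have "(\<sigma> g * B * \<rho> (inv g)) $$ (i,j) = (\<Sum>b<k. (\<Sum>a<p. \<sigma> g $$ (i,a) * B $$ (a,b)) * \<rho> (inv g) $$ (b,j))"
      using sg B rg i j by (simp add: scalar_prod_def row_def col_def atLeast0LessThan del: assoc_mult_mat)
    also have "\<dots> = (\<Sum>b<k. \<Sum>a<p. \<sigma> g $$ (i,a) * B $$ (a,b) * \<rho> (inv g) $$ (b,j))"
      by (simp add: sum_distrib_right)
    also have "\<dots> = (\<Sum>a<p. \<Sum>b<k. \<sigma> g $$ (i,a) * B $$ (a,b) * \<rho> (inv g) $$ (b,j))"
      by (rule sum.swap)
    finally show ?thesis .
  qed
  hence "(\<Sum>g\<in>carrier G. (\<sigma> g * B * \<rho> (inv g)) $$ (i,j))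
      = (\<Sum>g\<in>carrier G. \<Sum>a<p. \<Sum>b<k. \<sigma> g $$ (i,a) * B $$ (a,b) * \<rho> (inv g) $$ (b,j))"
    by (rule sum.cong[OF refl])
  thus ?thesis unfolding twirl_def
    by (simp add: sum_distrib_left sum.swap[of _ "carrier G"] algebra_simps)
qed

lemma sum_conj_urep_intertwiner:
  assumes s: "unitary_rep G p \<sigma>" and r: "unitary_rep G k \<rho>"
    and B: "B \<in> carrier_mat p k" and inter: "\<forall>g\<in>carrier G. \<sigma> g * B = B * \<rho> g"
    and i: "i < p" and j: "j < k"
  shows "(\<Sum>g\<in>carrier G. (\<sigma> g * B * \<rho> (inv g)) $$ (i,j)) = of_nat (card (carrier G)) * B $$ (i,j)"
proof -
  have "\<sigma> g * B * \<rho> (inv g) = B" if g: "g \<in> carrier G" for g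
  proof -
    have "\<sigma> g * B * \<rho> (inv g) = B * \<rho> g * \<rho> (inv g)" using inter g by simp
    also have "\<dots> = B * (\<rho> g * \<rho> (inv g))"
      using g B unitary_rep_carrier[OF r] by (intro assoc_mult_mat[of _ p k _ k _ k]) auto
    finally show ?thesis using B by (simp add: unitary_rep_mult_inv[OF r g])
  qed
  thus ?thesis by simp
qed

lemma char_inner_pos_of_isometric_intertwiner:
  assumes s: "unitary_rep G p \<sigma>" and r: "unitary_rep G k \<rho>"
    and B: "B \<in> carrier_mat p k" and BB: "adj B * B = 1\<^sub>m k" and k: "k > 0"
    and inter: "\<forall>g\<in>carrier G. \<sigma> g * B = B * \<rho> g"
  shows "Re (char_inner G (character G \<rho>) (character G \<sigma>)) > 0"
proof -
  define R where "R = (\<Sum>a<p. \<Sum>b<k. \<Sum>i<p. \<Sum>j<k. (cmod (twirl \<sigma> \<rho> a b i j))\<^sup>2)"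
  have "R \<noteq> 0"
  proof
    assume "R = 0"
    hence "B $$ (i,j) = 0" if "i < p" "j < k" for i j
      using sum_conj_urep_twirl[OF s r B that] sum_conj_urep_intertwiner[OF s r B inter that]
        sum4_norm_sq_eq_0[where z="twirl \<sigma> \<rho>"] that card_carrier_pos
      by (simp add: R_def)
    hence "B = 0\<^sub>m p k" using B by (intro eq_matI) auto
    hence "(1\<^sub>m k :: complex mat) $$ (0,0) = 0\<^sub>m k k $$ (0,0)" using B BB by simp
    thus False using k by simp
  qed
  moreover have "R \<ge> 0" unfolding R_def by (intro sum_nonneg) auto
  ultimately show ?thesis unfolding char_inner_twirl[OF s r] R_def[symmetric]
    using card_carrier_pos by simp
qed

lemma twirl_intertwines:
  assumes t: "unitary_rep G q \<tau>" and r: "unitary_rep G k \<rho>" and h: "h \<in> carrier G"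
    and k0: "k0 < q" and l0: "l0 < k"
  shows "\<tau> h * mat q k (\<lambda>(i,j). twirl \<tau> \<rho> k0 l0 i j) = mat q k (\<lambda>(i,j). twirl \<tau> \<rho> k0 l0 i j) * \<rho> h"
proof (rule eq_matI)
  define S where "S = mat q k (\<lambda>(i,j). twirl \<tau> \<rho> k0 l0 i j)"
  have th: "\<tau> h \<in> carrier_mat q q" and rh: "\<rho> h \<in> carrier_mat k k"
    using unitary_rep_carrier[OF t h] unitary_rep_carrier[OF r h] .
  fix i j assume "i < dim_row (S * \<rho> h)" "j < dim_col (S * \<rho> h)"
  hence i: "i < q" and j: "j < k" using rh by (auto simp: S_def)
  have "(\<tau> h * S) $$ (i,j) = (\<Sum>r<q. \<tau> h $$ (i,r) * twirl \<tau> \<rho> k0 l0 r j)"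
    using th i j by (simp add: S_def scalar_prod_def row_def col_def atLeast0LessThan)
  also have "\<dots> = (\<Sum>g\<in>carrier G. (\<Sum>r<q. \<tau> h $$ (i,r) * \<tau> g $$ (r,k0)) * \<rho> (inv g) $$ (l0,j))"
    unfolding twirl_def
    by (simp add: sum_distrib_left sum_distrib_right sum.swap[of _ "carrier G"] algebra_simps)
  also have "\<dots> = (\<Sum>g\<in>carrier G. \<tau> (h \<otimes> g) $$ (i,k0) * \<rho> (inv (h \<otimes> g) \<otimes> h) $$ (l0,j))"
  proof (intro sum.cong refl)
    fix g assume g: "g \<in> carrier G"
    have "\<tau> (h \<otimes> g) $$ (i,k0) = (\<Sum>r<q. \<tau> h $$ (i,r) * \<tau> g $$ (r,k0))"
      using th unitary_rep_carrier[OF t g] i k0 g h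
      by (simp add: unitary_rep_mult[OF t] scalar_prod_def row_def col_def atLeast0LessThan)
    moreover have "inv (h \<otimes> g) \<otimes> h = inv g" using g h by (simp add: inv_mult_group m_assoc)
    ultimately show "(\<Sum>r<q. \<tau> h $$ (i,r) * \<tau> g $$ (r,k0)) * \<rho> (inv g) $$ (l0,j)
        = \<tau> (h \<otimes> g) $$ (i,k0) * \<rho> (inv (h \<otimes> g) \<otimes> h) $$ (l0,j)"
      by simp
  qed
  also have "\<dots> = (\<Sum>g\<in>carrier G. \<tau> g $$ (i,k0) * \<rho> (inv g \<otimes> h) $$ (l0,j))"
    by (rule sum_carrier_reindex_mult[OF h, where F="\<lambda>g. \<tau> g $$ (i,k0) * \<rho> (inv g \<otimes> h) $$ (l0,j)"])
  also have "\<dots> = (\<Sum>g\<in>carrier G. \<tau> g $$ (i,k0) * (\<Sum>r<k. \<rho> (inv g) $$ (l0,r) * \<rho> h $$ (r,j)))"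
  proof (intro sum.cong refl)
    fix g assume g: "g \<in> carrier G"
    show "\<tau> g $$ (i,k0) * \<rho> (inv g \<otimes> h) $$ (l0,j)
        = \<tau> g $$ (i,k0) * (\<Sum>r<k. \<rho> (inv g) $$ (l0,r) * \<rho> h $$ (r,j))"
      using rh unitary_rep_carrier[OF r inv_closed[OF g]] l0 j g h
      by (simp add: unitary_rep_mult[OF r] scalar_prod_def row_def col_def atLeast0LessThan)
  qed
  also have "\<dots> = (\<Sum>r<k. twirl \<tau> \<rho> k0 l0 i r * \<rho> h $$ (r,j))"
    unfolding twirl_def
    by (simp add: sum_distrib_left sum_distrib_right sum.swap[of _ "carrier G"] algebra_simps)
  also have "\<dots> = (S * \<rho> h) $$ (i,j)"
    using rh i j by (simp add: S_def scalar_prod_def row_def col_def atLeast0LessThan)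
  finally show "(\<tau> h * S) $$ (i,j) = (S * \<rho> h) $$ (i,j)" .
qed (use unitary_rep_carrier[OF t h] unitary_rep_carrier[OF r h] in auto)

lemma nonzero_intertwiner_exists:
  assumes t: "unitary_rep G q \<tau>" and r: "unitary_rep G k \<rho>"
    and pos: "Re (char_inner G (character G \<rho>) (character G \<tau>)) > 0"
  shows "\<exists>S. S \<in> carrier_mat q k \<and> S \<noteq> 0\<^sub>m q k \<and> (\<forall>g\<in>carrier G. \<tau> g * S = S * \<rho> g)"
proof -
  have "(\<Sum>a<q. \<Sum>b<k. \<Sum>i<q. \<Sum>j<k. (cmod (twirl \<tau> \<rho> a b i j))\<^sup>2) \<noteq> 0"
    using pos unfolding char_inner_twirl[OF t r] by auto
  then obtain k0 l0 i0 j0 where kl: "k0 < q" "l0 < k" "i0 < q" "j0 < k"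
    and nz: "twirl \<tau> \<rho> k0 l0 i0 j0 \<noteq> 0"
    by (metis (no_types, lifting) lessThan_iff norm_zero power_zero_numeral sum.neutral)
  define S where "S = mat q k (\<lambda>(i,j). twirl \<tau> \<rho> k0 l0 i j)"
  have "S \<noteq> 0\<^sub>m q k"
  proof
    assume "S = 0\<^sub>m q k"
    hence "S $$ (i0,j0) = 0" using kl by simp
    thus False using nz kl by (simp add: S_def)
  qed
  moreover have "\<forall>g\<in>carrier G. \<tau> g * S = S * \<rho> g"
    using twirl_intertwines[OF t r _ kl(1,2)] unfolding S_def by blast
  ultimately show ?thesis by (intro exI[of _ S]) (simp add: S_def)
qed

lemma adj_intertwines:
  assumes t: "unitary_rep G q \<tau>" and r: "unitary_rep G k \<rho>" and S: "S \<in> carrier_mat q k"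
    and inter: "\<forall>g\<in>carrier G. \<tau> g * S = S * \<rho> g" and g: "g \<in> carrier G"
  shows "\<rho> g * adj S = adj S * \<tau> g"
proof -
  have ig: "inv g \<in> carrier G" using g by simp
  have "\<rho> g * adj S = adj (\<rho> (inv g)) * adj S" using unitary_rep_inv[OF r ig] g by simp
  also have "\<dots> = adj (S * \<rho> (inv g))" by (rule adj_mult[OF S unitary_rep_carrier[OF r ig], symmetric])
  also have "S * \<rho> (inv g) = \<tau> (inv g) * S" using inter ig by simp
  also have "adj (\<tau> (inv g) * S) = adj S * adj (\<tau> (inv g))" by (rule adj_mult[OF unitary_rep_carrier[OF t ig] S])
  finally show ?thesis using unitary_rep_inv[OF t ig] g by simp
qed

lemma adj_mult_intertwiner_commutes:
  assumes t: "unitary_rep G q \<tau>" and r: "unitary_rep G k \<rho>" and S: "S \<in> carrier_mat q k"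
    and inter: "\<forall>g\<in>carrier G. \<tau> g * S = S * \<rho> g" and g: "g \<in> carrier G"
  shows "\<rho> g * (adj S * S) = adj S * S * \<rho> g"
proof -
  have "\<rho> g * (adj S * S) = (\<rho> g * adj S) * S"
    by (rule assoc_mult_mat[symmetric, OF unitary_rep_carrier[OF r g] adj_carrier[OF S] S])
  also have "\<dots> = adj S * (\<tau> g * S)"
    unfolding adj_intertwines[OF t r S inter g]
    by (rule assoc_mult_mat[OF adj_carrier[OF S] unitary_rep_carrier[OF t g] S])
  also have "\<dots> = adj S * S * \<rho> g"
    using inter g by (simp add: assoc_mult_mat[OF adj_carrier[OF S] S unitary_rep_carrier[OF r g]])
  finally show ?thesis .
qed

lemma commuting_irreducible_scalar:
  assumes r: "unitary_rep G k \<rho>" and irr: "irreducible_rep G k \<rho>"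
    and X: "X \<in> carrier_mat k k" and comm: "\<forall>g\<in>carrier G. \<rho> g * X = X * \<rho> g"
  shows "\<exists>lam. \<forall>a<k. \<forall>b<k. X $$ (a,b) = (if a = b then lam else 0)"
proof -
  have k: "k > 0" using irr by (simp add: irreducible_rep_def)
  obtain lam v where v: "v \<in> carrier_vec k" "v \<noteq> 0\<^sub>v k" "X *\<^sub>v v = lam \<cdot>\<^sub>v v"
    using eigenvector_exists[OF X k] by blast
  define E where "E = {w \<in> carrier_vec k. X *\<^sub>v w = lam \<cdot>\<^sub>v w}"
  have "subspace_vec k E" unfolding E_def by (rule subspace_eigenspace[OF X])
  moreover have "\<forall>g\<in>carrier G. \<forall>w\<in>E. \<rho> g *\<^sub>v w \<in> E"
  proof (intro ballI)
    fix g w assume g: "g \<in> carrier G" and w: "w \<in> E"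
    have rg: "\<rho> g \<in> carrier_mat k k" by (rule unitary_rep_carrier[OF r g])
    have wc: "w \<in> carrier_vec k" using w by (auto simp: E_def)
    have "X *\<^sub>v (\<rho> g *\<^sub>v w) = (X * \<rho> g) *\<^sub>v w" by (rule assoc_mult_mat_vec[symmetric, OF X rg wc])
    also have "\<dots> = (\<rho> g * X) *\<^sub>v w" using comm g by simp
    also have "\<dots> = \<rho> g *\<^sub>v (X *\<^sub>v w)" by (rule assoc_mult_mat_vec[OF rg X wc])
    also have "\<dots> = lam \<cdot>\<^sub>v (\<rho> g *\<^sub>v w)" using w by (simp add: E_def mult_mat_vec[OF rg wc])
    finally show "\<rho> g *\<^sub>v w \<in> E" using rg wc by (simp add: E_def)
  qed
  ultimately have "E = {0\<^sub>v k} \<or> E = carrier_vec k" using irr by (simp add: irreducible_rep_def)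
  moreover have "v \<in> E" using v by (simp add: E_def)
  ultimately have E: "E = carrier_vec k" using v by auto
  have "X $$ (a,b) = (if a = b then lam else 0)" if a: "a < k" and b: "b < k" for a b
  proof -
    have "unit_vec k b \<in> E" using E by simp
    hence "X *\<^sub>v unit_vec k b = lam \<cdot>\<^sub>v unit_vec k b" by (simp add: E_def)
    hence "(X *\<^sub>v unit_vec k b) $ a = (lam \<cdot>\<^sub>v unit_vec k b) $ a" by simp
    thus ?thesis using X a b by (simp add: scalar_prod_right_unit)
  qed
  thus ?thesis by blast
qed

lemma isometric_intertwiner_of_irreducible:
  assumes t: "unitary_rep G q \<tau>" and r: "unitary_rep G k \<rho>" and irr: "irreducible_rep G k \<rho>"
    and S: "S \<in> carrier_mat q k" and S0: "S \<noteq> 0\<^sub>m q k"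
    and inter: "\<forall>g\<in>carrier G. \<tau> g * S = S * \<rho> g"
  shows "\<exists>J. J \<in> carrier_mat q k \<and> adj J * J = 1\<^sub>m k \<and> (\<forall>g\<in>carrier G. \<tau> g * J = J * \<rho> g)"
proof -
  obtain lam where lam: "\<And>a b. a < k \<Longrightarrow> b < k \<Longrightarrow> (adj S * S) $$ (a,b) = (if a = b then lam else 0)"
    using commuting_irreducible_scalar[OF r irr mult_carrier_mat[OF adj_carrier[OF S] S]]
      adj_mult_intertwiner_commutes[OF t r S inter] by blast
  obtain i0 c0 where ic: "i0 < q" "c0 < k" "S $$ (i0,c0) \<noteq> 0"
    using S S0 by (metis (no_types, lifting) carrier_matD eq_matI index_zero_mat)
  define r0 where "r0 = (\<Sum>i<q. (cmod (S $$ (i,c0)))\<^sup>2)"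
  have "lam = (adj S * S) $$ (c0,c0)" using lam[OF ic(2) ic(2)] by simp
  also have "\<dots> = (\<Sum>i<q. cnj (S $$ (i,c0)) * S $$ (i,c0))" by (rule adj_mult_index[OF S S ic(2) ic(2)])
  also have "\<dots> = of_real r0" unfolding r0_def by (rule sum_cnj_mult_self)
  finally have "lam = of_real r0" .
  moreover have "r0 \<ge> (cmod (S $$ (i0,c0)))\<^sup>2" unfolding r0_def using ic(1)
    by (intro member_le_sum) auto
  hence r0: "r0 > 0" using ic(3) by (smt (verit) zero_less_power2 norm_eq_zero)
  define c where "c = complex_of_real (1 / sqrt r0)"
  define J where "J = c \<cdot>\<^sub>m S"
  have J: "J \<in> carrier_mat q k" using S by (simp add: J_def)
  have "adj J * J = 1\<^sub>m k"
  proof (rule eq_matI)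
    fix a b assume "a < dim_row (1\<^sub>m k)" "b < dim_col (1\<^sub>m k)"
    hence a: "a < k" and b: "b < k" by auto
    have "(adj J * J) $$ (a,b) = (cnj c * c) * (\<Sum>i<q. cnj (S $$ (i,a)) * S $$ (i,b))"
      using S a b adj_mult_index[OF J J a b] by (simp add: J_def sum_distrib_left algebra_simps)
    also have "\<dots> = of_real (1 / r0) * (adj S * S) $$ (a,b)"
      using r0 adj_mult_index[OF S S a b] by (simp add: c_def flip: of_real_mult)
    finally show "(adj J * J) $$ (a,b) = 1\<^sub>m k $$ (a,b)"
      using lam[OF a b] \<open>lam = of_real r0\<close> a b r0 by (simp flip: of_real_mult)
  qed (use J in auto)
  moreover have "\<tau> g * J = J * \<rho> g" if g: "g \<in> carrier G" for g
    using inter g S unitary_rep_carrier[OF t g] unitary_rep_carrier[OF r g]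
    by (simp add: J_def mult_smult_distrib mult_smult_assoc_mat)
  ultimately show ?thesis using J by blast
qed

section \<open>Invariant subspaces and embeddings into multiples\<close>

text \<open>Invariant subspaces are represented by isometries \<open>B\<close> onto them; the subrepresentation
  on the range of \<open>B\<close> is then \<open>g \<mapsto> B\<^sup>* \<sigma>(g) B\<close>.\<close>

definition invariant_isometry :: "('g \<Rightarrow> complex mat) \<Rightarrow> nat \<Rightarrow> complex mat \<Rightarrow> nat \<Rightarrow> bool" where
  "invariant_isometry \<sigma> p B k \<longleftrightarrow> B \<in> carrier_mat p k \<and> adj B * B = 1\<^sub>m k \<and>
     (\<forall>g\<in>carrier G. \<sigma> g * B = B * (adj B * \<sigma> g * B))"

lemma unitary_rep_compress_mult:
  assumes s: "unitary_rep G p \<sigma>" and iso: "invariant_isometry \<sigma> p B k" and g: "g \<in> carrier G" and h: "h \<in> carrier G"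
  shows "adj B * \<sigma> (g \<otimes> h) * B = (adj B * \<sigma> g * B) * (adj B * \<sigma> h * B)"
proof -
  have Bc: "B \<in> carrier_mat p k" and BB: "adj B * B = 1\<^sub>m k" using iso by (auto simp: invariant_isometry_def)
  have sg: "\<sigma> g \<in> carrier_mat p p" and sh: "\<sigma> h \<in> carrier_mat p p" using unitary_rep_carrier[OF s] g h by auto
  have aB: "adj B \<in> carrier_mat k p" using Bc by simp
  have rh: "adj B * \<sigma> h * B \<in> carrier_mat k k" using aB sh Bc by (meson mult_carrier_mat)
  have asg: "adj B * \<sigma> g \<in> carrier_mat k p" using aB sg by (rule mult_carrier_mat)
  have "adj B * \<sigma> (g \<otimes> h) * B = adj B * (\<sigma> g * \<sigma> h) * B" using unitary_rep_mult[OF s g h] by simp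
  also have "adj B * (\<sigma> g * \<sigma> h) = (adj B * \<sigma> g) * \<sigma> h"
    by (rule assoc_mult_mat[symmetric, OF aB sg sh])
  also have "(adj B * \<sigma> g) * \<sigma> h * B = (adj B * \<sigma> g) * (\<sigma> h * B)"
    by (rule assoc_mult_mat[OF asg sh Bc])
  also have "\<sigma> h * B = B * (adj B * \<sigma> h * B)" using iso h by (simp add: invariant_isometry_def)
  also have "(adj B * \<sigma> g) * (B * (adj B * \<sigma> h * B)) = (adj B * \<sigma> g * B) * (adj B * \<sigma> h * B)"
    by (rule assoc_mult_mat[symmetric, OF asg Bc rh])
  finally show ?thesis .
qed

lemma unitary_rep_compress:
  assumes s: "unitary_rep G p \<sigma>" and iso: "invariant_isometry \<sigma> p B k"
  shows "unitary_rep G k (\<lambda>g. adj B * \<sigma> g * B)"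
proof -
  have Bc: "B \<in> carrier_mat p k" and BB: "adj B * B = 1\<^sub>m k" using iso by (auto simp: invariant_isometry_def)
  have aB: "adj B \<in> carrier_mat k p" using Bc by simp
  have rc: "adj B * \<sigma> g * B \<in> carrier_mat k k" if g: "g \<in> carrier G" for g
    using aB unitary_rep_carrier[OF s g] Bc by (meson mult_carrier_mat)
  have one: "adj B * \<sigma> \<one> * B = 1\<^sub>m k"
  proof -
    have "adj B * 1\<^sub>m p = adj B" by (rule right_mult_one_mat[OF aB])
    thus ?thesis using unitary_rep_one[OF s] BB by simp
  qed
  have adjr: "adj (adj B * \<sigma> g * B) = adj B * \<sigma> (inv g) * B" if g: "g \<in> carrier G" for g
  proof -
    have sg: "\<sigma> g \<in> carrier_mat p p" by (rule unitary_rep_carrier[OF s g])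
    have "adj (adj B * \<sigma> g * B) = adj B * adj (adj B * \<sigma> g)"
      by (rule adj_mult[OF mult_carrier_mat[OF aB sg] Bc])
    also have "adj (adj B * \<sigma> g) = adj (\<sigma> g) * B" using adj_mult[OF aB sg] by simp
    also have "adj (\<sigma> g) = \<sigma> (inv g)" using unitary_rep_inv[OF s g] by simp
    also have "adj B * (\<sigma> (inv g) * B) = adj B * \<sigma> (inv g) * B"
      by (rule assoc_mult_mat[symmetric, OF aB unitary_rep_carrier[OF s inv_closed[OF g]] Bc])
    finally show ?thesis .
  qed
  have un: "unitary_mat k (adj B * \<sigma> g * B)" if g: "g \<in> carrier G" for g
  proof -
    have ig: "inv g \<in> carrier G" using g by simp
    have "adj (adj B * \<sigma> g * B) * (adj B * \<sigma> g * B) = adj B * \<sigma> (inv g \<otimes> g) * B"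
      unfolding adjr[OF g] by (rule unitary_rep_compress_mult[OF s iso ig g, symmetric])
    moreover have "(adj B * \<sigma> g * B) * adj (adj B * \<sigma> g * B) = adj B * \<sigma> (g \<otimes> inv g) * B"
      unfolding adjr[OF g] by (rule unitary_rep_compress_mult[OF s iso g ig, symmetric])
    moreover have "inv g \<otimes> g = \<one>" "g \<otimes> inv g = \<one>" using g by auto
    ultimately show ?thesis unfolding unitary_mat_def using rc[OF g] one by metis
  qed
  show ?thesis unfolding unitary_rep_def rep_def
    using rc one un unitary_rep_compress_mult[OF s iso] by blast
qed

lemma adj_invariant_isometry_mult:
  assumes s: "unitary_rep G p \<sigma>" and iso: "invariant_isometry \<sigma> p B k" and g: "g \<in> carrier G"
  shows "adj B * \<sigma> g = (adj B * \<sigma> g * B) * adj B"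
proof -
  have Bc: "B \<in> carrier_mat p k" using iso by (auto simp: invariant_isometry_def)
  have ig: "inv g \<in> carrier G" using g by simp
  have r: "unitary_rep G k (\<lambda>g. adj B * \<sigma> g * B)" by (rule unitary_rep_compress[OF s iso])
  have "\<sigma> (inv g) * B = B * (adj B * \<sigma> (inv g) * B)" using iso ig by (simp add: invariant_isometry_def)
  hence "adj (\<sigma> (inv g) * B) = adj (B * (adj B * \<sigma> (inv g) * B))" by simp
  moreover have "adj (\<sigma> (inv g) * B) = adj B * adj (\<sigma> (inv g))"
    by (rule adj_mult[OF unitary_rep_carrier[OF s ig] Bc])
  moreover have "adj (\<sigma> (inv g)) = \<sigma> g" using unitary_rep_inv[OF s ig] g by simp
  moreover have "adj (B * (adj B * \<sigma> (inv g) * B)) = adj (adj B * \<sigma> (inv g) * B) * adj B"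
    by (rule adj_mult[OF Bc unitary_rep_carrier[OF r ig]])
  moreover have "adj (adj B * \<sigma> (inv g) * B) = adj B * \<sigma> g * B"
    using unitary_rep_inv[OF r ig] g by simp
  ultimately show ?thesis by simp
qed

lemma invariant_isometryI:
  assumes s: "unitary_rep G p \<sigma>" and Bc: "B \<in> carrier_mat p k" and BB: "adj B * B = 1\<^sub>m k"
    and R: "\<And>g x. g \<in> carrier G \<Longrightarrow> x \<in> carrier_vec k \<Longrightarrow> \<exists>y\<in>carrier_vec k. \<sigma> g *\<^sub>v (B *\<^sub>v x) = B *\<^sub>v y"
  shows "invariant_isometry \<sigma> p B k"
  unfolding invariant_isometry_def
proof (intro conjI ballI Bc BB)
  fix g assume g: "g \<in> carrier G"
  have sg: "\<sigma> g \<in> carrier_mat p p" by (rule unitary_rep_carrier[OF s g])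
  have aB: "adj B \<in> carrier_mat k p" using Bc by simp
  have r: "adj B * \<sigma> g * B \<in> carrier_mat k k" using aB sg Bc by (meson mult_carrier_mat)
  show "\<sigma> g * B = B * (adj B * \<sigma> g * B)"
  proof (rule eq_mat_by_mult_vec[OF mult_carrier_mat[OF sg Bc] mult_carrier_mat[OF Bc r]])
    fix x :: "complex vec" assume x: "x \<in> carrier_vec k"
    obtain y where y: "y \<in> carrier_vec k" "\<sigma> g *\<^sub>v (B *\<^sub>v x) = B *\<^sub>v y" using R[OF g x] by blast
    have "(\<sigma> g * B) *\<^sub>v x = \<sigma> g *\<^sub>v (B *\<^sub>v x)" by (rule assoc_mult_mat_vec[OF sg Bc x])
    also have "\<dots> = B *\<^sub>v y" by (rule y(2))
    finally have 1: "(\<sigma> g * B) *\<^sub>v x = B *\<^sub>v y" .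
    have "(B * (adj B * \<sigma> g * B)) *\<^sub>v x = B *\<^sub>v ((adj B * \<sigma> g * B) *\<^sub>v x)"
      by (rule assoc_mult_mat_vec[OF Bc r x])
    also have "(adj B * \<sigma> g * B) *\<^sub>v x = (adj B * \<sigma> g) *\<^sub>v (B *\<^sub>v x)"
      by (rule assoc_mult_mat_vec[OF mult_carrier_mat[OF aB sg] Bc x])
    also have "\<dots> = adj B *\<^sub>v (\<sigma> g *\<^sub>v (B *\<^sub>v x))"
      by (rule assoc_mult_mat_vec[OF aB sg mult_mat_vec_carrier[OF Bc x]])
    also have "\<dots> = adj B *\<^sub>v (B *\<^sub>v y)" unfolding y(2) ..
    also have "\<dots> = (adj B * B) *\<^sub>v y" by (rule assoc_mult_mat_vec[symmetric, OF aB Bc y(1)])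
    also have "\<dots> = y" unfolding BB using y(1) by simp
    finally show "(\<sigma> g * B) *\<^sub>v x = (B * (adj B * \<sigma> g * B)) *\<^sub>v x" using 1 by simp
  qed
qed

lemma invariant_isometry_mult_vec:
  assumes s: "unitary_rep G p \<sigma>" and iso: "invariant_isometry \<sigma> p B k" and g: "g \<in> carrier G" and x: "x \<in> carrier_vec k"
  shows "\<sigma> g *\<^sub>v (B *\<^sub>v x) = B *\<^sub>v ((adj B * \<sigma> g * B) *\<^sub>v x)"
proof -
  have Bc: "B \<in> carrier_mat p k" using iso by (simp add: invariant_isometry_def)
  have r: "adj B * \<sigma> g * B \<in> carrier_mat k k" using unitary_rep_carrier[OF unitary_rep_compress[OF s iso] g] .
  have "\<sigma> g *\<^sub>v (B *\<^sub>v x) = (\<sigma> g * B) *\<^sub>v x" by (rule assoc_mult_mat_vec[symmetric, OF unitary_rep_carrier[OF s g] Bc x])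
  also have "\<sigma> g * B = B * (adj B * \<sigma> g * B)" using iso g by (simp add: invariant_isometry_def)
  also have "(B * (adj B * \<sigma> g * B)) *\<^sub>v x = B *\<^sub>v ((adj B * \<sigma> g * B) *\<^sub>v x)"
    by (rule assoc_mult_mat_vec[OF Bc r x])
  finally show ?thesis .
qed

lemma invariant_isometry_one: "unitary_rep G p \<sigma> \<Longrightarrow> invariant_isometry \<sigma> p (1\<^sub>m p) p"
  unfolding invariant_isometry_def by (auto dest: unitary_rep_carrier)

lemma invariant_isometry_restrict:
  assumes s: "unitary_rep G p \<sigma>" and iso: "invariant_isometry \<sigma> p B k"
    and C: "C \<in> carrier_mat k j" and CC: "adj C * C = 1\<^sub>m j" and R: "range_in C j S"
    and span: "\<forall>v\<in>S. \<exists>x\<in>carrier_vec j. v = C *\<^sub>v x"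
    and inv: "\<forall>g\<in>carrier G. \<forall>v\<in>S. (adj B * \<sigma> g * B) *\<^sub>v v \<in> S"
  shows "invariant_isometry \<sigma> p (B * C) j"
proof -
  have B: "B \<in> carrier_mat p k" and BB: "adj B * B = 1\<^sub>m k"
    using iso by (auto simp: invariant_isometry_def)
  show ?thesis
  proof (rule invariant_isometryI[OF s mult_carrier_mat[OF B C] isometry_mult[OF B BB C CC]])
    fix g and x :: "complex vec" assume g: "g \<in> carrier G" and x: "x \<in> carrier_vec j"
    have Cx: "C *\<^sub>v x \<in> carrier_vec k" using C x by simp
    have "(adj B * \<sigma> g * B) *\<^sub>v (C *\<^sub>v x) \<in> S" using inv g R x by (simp add: range_in_def)
    then obtain y where y: "y \<in> carrier_vec j" "(adj B * \<sigma> g * B) *\<^sub>v (C *\<^sub>v x) = C *\<^sub>v y"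
      using span by blast
    have "\<sigma> g *\<^sub>v ((B * C) *\<^sub>v x) = \<sigma> g *\<^sub>v (B *\<^sub>v (C *\<^sub>v x))"
      using assoc_mult_mat_vec[OF B C x] by simp
    also have "\<dots> = B *\<^sub>v (C *\<^sub>v y)" unfolding invariant_isometry_mult_vec[OF s iso g Cx] y(2) ..
    also have "\<dots> = (B * C) *\<^sub>v y" by (rule assoc_mult_mat_vec[symmetric, OF B C y(1)])
    finally show "\<exists>y\<in>carrier_vec j. \<sigma> g *\<^sub>v ((B * C) *\<^sub>v x) = (B * C) *\<^sub>v y" using y(1) by blast
  qed
qed

text \<open>A nonzero invariant isometry of minimal dimension spans an irreducible subrepresentation.\<close>

lemma irreducible_subrep_exists:
  assumes s: "unitary_rep G p \<sigma>" and p: "p > 0"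
  shows "\<exists>k B. k > 0 \<and> invariant_isometry \<sigma> p B k \<and> irreducible_rep G k (\<lambda>g. adj B * \<sigma> g * B)"
proof -
  define Q where "Q = {k. k > 0 \<and> (\<exists>B. invariant_isometry \<sigma> p B k)}"
  have "p \<in> Q" using p invariant_isometry_one[OF s] by (auto simp: Q_def)
  define k where "k = (LEAST k. k \<in> Q)"
  have "k \<in> Q" unfolding k_def using \<open>p \<in> Q\<close> by (rule LeastI)
  then obtain B where k: "k > 0" and iso: "invariant_isometry \<sigma> p B k" by (auto simp: Q_def)
  have "S = {0\<^sub>v k} \<or> S = carrier_vec k"
    if sub: "subspace_vec k S" and inv: "\<forall>g\<in>carrier G. \<forall>v\<in>S. (adj B * \<sigma> g * B) *\<^sub>v v \<in> S" for S
  proof (rule ccontr)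
    assume "\<not> (S = {0\<^sub>v k} \<or> S = carrier_vec k)"
    moreover obtain j C where C: "C \<in> carrier_mat k j" "adj C * C = 1\<^sub>m j" "range_in C j S"
      and span: "\<forall>v\<in>S. \<exists>x\<in>carrier_vec j. v = C *\<^sub>v x"
      using subspace_isometric_basis[OF sub] by blast
    ultimately have "0 < j" "j < k" using isometric_basis_dim_proper[OF sub] by blast+
    moreover have "invariant_isometry \<sigma> p (B * C) j"
      by (rule invariant_isometry_restrict[OF s iso C span inv])
    ultimately have "j \<in> Q \<and> j < k" by (auto simp: Q_def)
    thus False unfolding k_def using not_less_Least by blast
  qed
  moreover have "rep G k (\<lambda>g. adj B * \<sigma> g * B)"
    using unitary_rep_compress[OF s iso] by (simp add: unitary_rep_def)
  ultimately show ?thesis using k iso unfolding irreducible_rep_def by blast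
qed

lemma invariant_complement_exists:
  assumes s: "unitary_rep G p \<sigma>" and iso: "invariant_isometry \<sigma> p B k"
  shows "\<exists>k' B'. invariant_isometry \<sigma> p B' k' \<and> B * adj B + B' * adj B' = 1\<^sub>m p \<and> k + k' = p"
proof -
  have B: "B \<in> carrier_mat p k" and BB: "adj B * B = 1\<^sub>m k" using iso by (auto simp: invariant_isometry_def)
  have aB: "adj B \<in> carrier_mat k p" using B by simp
  define S where "S = {v \<in> carrier_vec p. adj B *\<^sub>v v = 0\<^sub>v k}"
  obtain k' B' where B': "B' \<in> carrier_mat p k'" "adj B' * B' = 1\<^sub>m k'" "range_in B' k' S"
    and span: "\<forall>v\<in>S. \<exists>x\<in>carrier_vec k'. v = B' *\<^sub>v x"
    using subspace_isometric_basis[OF subspace_kernel[OF aB]] unfolding S_def by blast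
  have decomp: "B * adj B + B' * adj B' = 1\<^sub>m p"
    using isometry_complement_decomp[OF B BB B'(1,2)] B'(3) span unfolding S_def by blast
  have "invariant_isometry \<sigma> p B' k'"
  proof (rule invariant_isometryI[OF s B'(1) B'(2)])
    fix g and x :: "complex vec" assume g: "g \<in> carrier G" and x: "x \<in> carrier_vec k'"
    have B'x: "B' *\<^sub>v x \<in> carrier_vec p" using B'(1) x by simp
    have sg: "\<sigma> g \<in> carrier_mat p p" by (rule unitary_rep_carrier[OF s g])
    have rg: "adj B * \<sigma> g * B \<in> carrier_mat k k" by (rule unitary_rep_carrier[OF unitary_rep_compress[OF s iso] g])
    have "adj B *\<^sub>v (\<sigma> g *\<^sub>v (B' *\<^sub>v x)) = (adj B * \<sigma> g) *\<^sub>v (B' *\<^sub>v x)"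
      by (rule assoc_mult_mat_vec[symmetric, OF aB sg B'x])
    also have "adj B * \<sigma> g = (adj B * \<sigma> g * B) * adj B" by (rule adj_invariant_isometry_mult[OF s iso g])
    also have "((adj B * \<sigma> g * B) * adj B) *\<^sub>v (B' *\<^sub>v x) = (adj B * \<sigma> g * B) *\<^sub>v (adj B *\<^sub>v (B' *\<^sub>v x))"
      by (rule assoc_mult_mat_vec[OF rg aB B'x])
    also have "adj B *\<^sub>v (B' *\<^sub>v x) = 0\<^sub>v k" using B'(3) x by (simp add: range_in_def S_def)
    also have "(adj B * \<sigma> g * B) *\<^sub>v 0\<^sub>v k = 0\<^sub>v k" using rg by (intro eq_vecI) (auto simp: scalar_prod_def)
    finally have "\<sigma> g *\<^sub>v (B' *\<^sub>v x) \<in> S" using sg B'x by (simp add: S_def)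
    thus "\<exists>y\<in>carrier_vec k'. \<sigma> g *\<^sub>v (B' *\<^sub>v x) = B' *\<^sub>v y" using span by blast
  qed
  moreover have "k + k' = p"
  proof -
    have "(of_nat p :: complex) = mtrace (B * adj B + B' * adj B')" unfolding decomp mtrace_one ..
    also have "\<dots> = of_nat k + of_nat k'"
      using mtrace_add[OF mult_carrier_mat[OF B aB] mult_carrier_mat[OF B'(1) adj_carrier[OF B'(1)]]]
        mtrace_isometry[OF B BB] mtrace_isometry[OF B'(1) B'(2)] by simp
    finally show ?thesis by (metis of_nat_add of_nat_eq_iff)
  qed
  ultimately show ?thesis using decomp by blast
qed

definition multiple_embedding :: "('g \<Rightarrow> complex mat) \<Rightarrow> nat \<Rightarrow> nat \<Rightarrow> ('g \<Rightarrow> complex mat) \<Rightarrow> nat \<Rightarrow> complex mat \<Rightarrow> bool" where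
  "multiple_embedding \<pi>' d' M \<sigma> p J \<longleftrightarrow> J \<in> carrier_mat (d' * M) p \<and> adj J * J = 1\<^sub>m p \<and>
     (\<forall>g\<in>carrier G. tensor_id (\<pi>' g) M * J = J * \<sigma> g)"

text \<open>The form of \<open>I(\<sigma>) \<subseteq> I(\<pi>')\<close> that passes to invariant subspaces, as the induction needs.\<close>

definition irreducibles_occur_in :: "('g \<Rightarrow> complex mat) \<Rightarrow> ('g \<Rightarrow> complex mat) \<Rightarrow> nat \<Rightarrow> bool" where
  "irreducibles_occur_in \<pi>' \<sigma> p \<longleftrightarrow> (\<forall>k \<rho> C. unitary_rep G k \<rho> \<and> irreducible_rep G k \<rho> \<and> C \<in> carrier_mat p k \<and>
      adj C * C = 1\<^sub>m k \<and> (\<forall>g\<in>carrier G. \<sigma> g * C = C * \<rho> g) \<longrightarrow>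
      Re (char_inner G (character G \<rho>) (character G \<pi>')) > 0)"

lemma irreducibles_occur_in_compress:
  assumes s: "unitary_rep G p \<sigma>" and iso: "invariant_isometry \<sigma> p B k"
    and occ: "irreducibles_occur_in \<pi>' \<sigma> p"
  shows "irreducibles_occur_in \<pi>' (\<lambda>g. adj B * \<sigma> g * B) k"
  unfolding irreducibles_occur_in_def
proof (intro allI impI)
  fix k2 \<rho> C
  assume H: "unitary_rep G k2 \<rho> \<and> irreducible_rep G k2 \<rho> \<and> C \<in> carrier_mat k k2 \<and>
    adj C * C = 1\<^sub>m k2 \<and> (\<forall>g\<in>carrier G. adj B * \<sigma> g * B * C = C * \<rho> g)"
  have B: "B \<in> carrier_mat p k" and BB: "adj B * B = 1\<^sub>m k" using iso by (auto simp: invariant_isometry_def)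
  have C: "C \<in> carrier_mat k k2" and CC: "adj C * C = 1\<^sub>m k2" using H by auto
  have "\<sigma> g * (B * C) = (B * C) * \<rho> g" if g: "g \<in> carrier G" for g
  proof -
    have sg: "\<sigma> g \<in> carrier_mat p p" and rg: "\<rho> g \<in> carrier_mat k2 k2"
      using unitary_rep_carrier[OF s g] H g by (auto simp: unitary_rep_carrier)
    have s2g: "adj B * \<sigma> g * B \<in> carrier_mat k k" by (rule unitary_rep_carrier[OF unitary_rep_compress[OF s iso] g])
    have "\<sigma> g * (B * C) = (\<sigma> g * B) * C" by (rule assoc_mult_mat[symmetric, OF sg B C])
    also have "\<sigma> g * B = B * (adj B * \<sigma> g * B)" using iso g by (simp add: invariant_isometry_def)
    also have "B * (adj B * \<sigma> g * B) * C = B * (adj B * \<sigma> g * B * C)" by (rule assoc_mult_mat[OF B s2g C])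
    also have "\<dots> = (B * C) * \<rho> g" using H g assoc_mult_mat[OF B C rg] by simp
    finally show ?thesis .
  qed
  thus "Re (char_inner G (character G \<rho>) (character G \<pi>')) > 0"
    using occ H mult_carrier_mat[OF B C] isometry_mult[OF B BB C CC]
    unfolding irreducibles_occur_in_def by blast
qed

lemma irreducibles_occur_in_of_Irr_in_subset:
  assumes s: "unitary_rep G p \<sigma>" and sub: "Irr_in G \<sigma> \<subseteq> Irr_in G \<pi>'"
  shows "irreducibles_occur_in \<pi>' \<sigma> p"
  unfolding irreducibles_occur_in_def
proof (intro allI impI)
  fix k \<rho> C
  assume H: "unitary_rep G k \<rho> \<and> irreducible_rep G k \<rho> \<and> C \<in> carrier_mat p k \<and>
      adj C * C = 1\<^sub>m k \<and> (\<forall>g\<in>carrier G. \<sigma> g * C = C * \<rho> g)"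
  hence "Re (char_inner G (character G \<rho>) (character G \<sigma>)) > 0"
    by (intro char_inner_pos_of_isometric_intertwiner[OF s]) (auto simp: irreducible_rep_def)
  moreover have "character G \<rho> \<in> irr_chars G" using H by (auto simp: irr_chars_def)
  ultimately have "character G \<rho> \<in> Irr_in G \<pi>'" using sub by (auto simp: Irr_in_def)
  thus "Re (char_inner G (character G \<rho>) (character G \<pi>')) > 0" by (simp add: Irr_in_def)
qed

lemma multiple_embedding_irreducible:
  assumes w: "unitary_rep G d' \<pi>'" and r: "unitary_rep G k \<rho>" and irr: "irreducible_rep G k \<rho>"
    and pos: "Re (char_inner G (character G \<rho>) (character G \<pi>')) > 0"
  shows "\<exists>J. multiple_embedding \<pi>' d' 1 \<rho> k J"
proof -
  obtain S where "S \<in> carrier_mat d' k" "S \<noteq> 0\<^sub>m d' k" "\<forall>g\<in>carrier G. \<pi>' g * S = S * \<rho> g"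
    using nonzero_intertwiner_exists[OF w r pos] by blast
  then obtain J where "J \<in> carrier_mat d' k" "adj J * J = 1\<^sub>m k" "\<forall>g\<in>carrier G. \<pi>' g * J = J * \<rho> g"
    using isometric_intertwiner_of_irreducible[OF w r irr] by blast
  moreover have "tensor_id (\<pi>' g) 1 = \<pi>' g" if "g \<in> carrier G" for g
    by (rule tensor_id_1[OF unitary_rep_carrier[OF w that]])
  ultimately show ?thesis unfolding multiple_embedding_def by (intro exI[of _ J]) simp
qed

lemma multiple_embedding_compress:
  assumes s: "unitary_rep G p \<sigma>" and iso: "invariant_isometry \<sigma> p B k"
    and w: "unitary_rep G d' \<pi>'" and J: "multiple_embedding \<pi>' d' M (\<lambda>g. adj B * \<sigma> g * B) k J"
  shows "J * adj B \<in> carrier_mat (d' * M) p" "adj (J * adj B) * (J * adj B) = B * adj B"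
    "\<forall>g\<in>carrier G. tensor_id (\<pi>' g) M * (J * adj B) = (J * adj B) * \<sigma> g"
proof -
  have B: "B \<in> carrier_mat p k" using iso by (simp add: invariant_isometry_def)
  have Jc: "J \<in> carrier_mat (d' * M) k" and JJ: "adj J * J = 1\<^sub>m k"
    and inter: "\<forall>g\<in>carrier G. tensor_id (\<pi>' g) M * J = J * (adj B * \<sigma> g * B)"
    using J by (auto simp: multiple_embedding_def)
  have aB: "adj B \<in> carrier_mat k p" using B by simp
  show "J * adj B \<in> carrier_mat (d' * M) p" using Jc aB by (rule mult_carrier_mat)
  have "adj (J * adj B) * (J * adj B) = B * adj J * (J * adj B)" using adj_mult[OF Jc aB] by simp
  also have "\<dots> = B * (adj J * J * adj B)"
    using B Jc by (simp add: assoc_mult_mat[OF B adj_carrier[OF Jc] mult_carrier_mat[OF Jc aB]]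
        assoc_mult_mat[OF adj_carrier[OF Jc] Jc aB])
  finally show "adj (J * adj B) * (J * adj B) = B * adj B" using left_mult_one_mat[OF aB] by (simp add: JJ)
  show "\<forall>g\<in>carrier G. tensor_id (\<pi>' g) M * (J * adj B) = (J * adj B) * \<sigma> g"
  proof
    fix g assume g: "g \<in> carrier G"
    have sg: "\<sigma> g \<in> carrier_mat p p" by (rule unitary_rep_carrier[OF s g])
    have rg: "adj B * \<sigma> g * B \<in> carrier_mat k k" by (rule unitary_rep_carrier[OF unitary_rep_compress[OF s iso] g])
    have Ag: "tensor_id (\<pi>' g) M \<in> carrier_mat (d' * M) (d' * M)" using unitary_rep_carrier[OF w g] by simp
    have "tensor_id (\<pi>' g) M * (J * adj B) = J * ((adj B * \<sigma> g * B) * adj B)"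
      using inter g assoc_mult_mat[OF Ag Jc aB, symmetric] assoc_mult_mat[OF Jc rg aB] by simp
    also have "(adj B * \<sigma> g * B) * adj B = adj B * \<sigma> g" by (rule adj_invariant_isometry_mult[OF s iso g, symmetric])
    finally show "tensor_id (\<pi>' g) M * (J * adj B) = (J * adj B) * \<sigma> g"
      by (simp add: assoc_mult_mat[OF Jc aB sg])
  qed
qed

lemma multiple_embedding_decomp:
  assumes w: "unitary_rep G d' \<pi>'" and s: "unitary_rep G p \<sigma>"
    and iso1: "invariant_isometry \<sigma> p B1 k1" and iso2: "invariant_isometry \<sigma> p B2 k2"
    and decomp: "B1 * adj B1 + B2 * adj B2 = 1\<^sub>m p"
    and J1: "multiple_embedding \<pi>' d' M1 (\<lambda>g. adj B1 * \<sigma> g * B1) k1 J1"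
    and J2: "multiple_embedding \<pi>' d' M2 (\<lambda>g. adj B2 * \<sigma> g * B2) k2 J2"
  shows "multiple_embedding \<pi>' d' (M1 + M2) \<sigma> p (tensor_stack d' M1 M2 (J1 * adj B1) (J2 * adj B2))"
proof -
  note e1 = multiple_embedding_compress[OF s iso1 w J1]
  note e2 = multiple_embedding_compress[OF s iso2 w J2]
  show ?thesis unfolding multiple_embedding_def
    using tensor_stack_carrier[OF e1(1)] adj_tensor_stack_mult[OF e1(1) e2(1)] e1(2,3) e2(2,3) decomp
      tensor_stack_intertwines[OF e1(1) e2(1) unitary_rep_carrier[OF w] unitary_rep_carrier[OF s]]
    by simp
qed

lemma multiple_embedding_exists:
  assumes w: "unitary_rep G d' \<pi>'"
  shows "unitary_rep G p \<sigma> \<Longrightarrow> irreducibles_occur_in \<pi>' \<sigma> p \<Longrightarrow> \<exists>M J. M \<ge> 1 \<and> multiple_embedding \<pi>' d' M \<sigma> p J"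
proof (induction p arbitrary: \<sigma> rule: less_induct)
  case (less p \<sigma>)
  note s = less.prems(1) and occ = less.prems(2)
  show ?case
  proof (cases "p = 0")
    case True
    have "tensor_id (\<pi>' g) 1 * 0\<^sub>m (d' * 1) 0 = 0\<^sub>m (d' * 1) 0 * \<sigma> g" if g: "g \<in> carrier G" for g
      using True carrier_matD[OF unitary_rep_carrier[OF w g]] carrier_matD[OF unitary_rep_carrier[OF s g]]
      by (intro eq_matI) auto
    hence "multiple_embedding \<pi>' d' 1 \<sigma> p (0\<^sub>m (d' * 1) 0)"
      using True unfolding multiple_embedding_def by (auto intro!: eq_matI)
    thus ?thesis by blast
  next
    case False
    then obtain k B where k: "k > 0" and iso: "invariant_isometry \<sigma> p B k"
      and irr: "irreducible_rep G k (\<lambda>g. adj B * \<sigma> g * B)"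
      using irreducible_subrep_exists[OF s] by blast
    have r: "unitary_rep G k (\<lambda>g. adj B * \<sigma> g * B)" by (rule unitary_rep_compress[OF s iso])
    have "Re (char_inner G (character G (\<lambda>g. adj B * \<sigma> g * B)) (character G \<pi>')) > 0"
      using occ r irr iso unfolding irreducibles_occur_in_def invariant_isometry_def by blast
    then obtain J1 where J1: "multiple_embedding \<pi>' d' 1 (\<lambda>g. adj B * \<sigma> g * B) k J1"
      using multiple_embedding_irreducible[OF w r irr] by blast
    obtain k' B' where iso': "invariant_isometry \<sigma> p B' k'"
      and decomp: "B * adj B + B' * adj B' = 1\<^sub>m p" and kk: "k + k' = p"
      using invariant_complement_exists[OF s iso] by blast
    obtain M' J' where "M' \<ge> 1" "multiple_embedding \<pi>' d' M' (\<lambda>g. adj B' * \<sigma> g * B') k' J'"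
      using less.IH[OF _ unitary_rep_compress[OF s iso'] irreducibles_occur_in_compress[OF s iso' occ]] kk k
      by auto
    thus ?thesis using multiple_embedding_decomp[OF w s iso iso' decomp J1] by fastforce
  qed
qed

end

lemma success_set_subset:
  fixes G :: "('g,'b) monoid_scheme" and \<pi> \<pi>' :: "'g \<Rightarrow> complex mat" and f :: "'g \<Rightarrow> 'x"
  assumes "group G" and "finite (carrier G)"
    and u: "unitary_rep G d \<pi>" and u': "unitary_rep G d' \<pi>'"
    and sub: "Irr_in G \<pi> \<subseteq> Irr_in G \<pi>'"
  shows "{success G \<pi> f N \<psi> Us E | N \<psi> Us E. algorithm d t N \<psi> Us E}
       \<subseteq> {success G \<pi>' f N \<psi> Us E | N \<psi> Us E. algorithm d' t N \<psi> Us E}"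
proof -
  interpret finite_group G using assms(1,2) by (simp add: finite_group_def finite_group_axioms_def)
  obtain M J where "M \<ge> 1" "multiple_embedding \<pi>' d' M \<pi> d J"
    using multiple_embedding_exists[OF u' u irreducibles_occur_in_of_Irr_in_subset[OF u sub]] by blast
  hence "\<exists>N' \<psi>' Us' (E' :: 'x \<Rightarrow> complex mat). algorithm d' t N' \<psi>' Us' E' \<and>
           success G \<pi>' f N' \<psi>' Us' E' = success G \<pi> f N \<psi> Us E"
    if "algorithm d t N \<psi> Us E" for N \<psi> Us E
    using that unitary_rep_carrier[OF u] unitary_rep_carrier[OF u']
    by (intro success_simulation[of J d' M d]) (auto simp: multiple_embedding_def)
  thus ?thesis by (smt (verit, best) Collect_mono_iff)
qed

theorem lemma2:
  fixes G :: "('g,'b) monoid_scheme"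
    and \<pi> \<pi>' :: "'g \<Rightarrow> complex mat"
    and d d' :: nat
    and f :: "'g \<Rightarrow> 'x"
    and t :: nat
  assumes "group G" and "finite (carrier G)"
    and "unitary_rep G d \<pi>" and "unitary_rep G d' \<pi>'"
    and "Irr_in G \<pi> = Irr_in G \<pi>'"
    and "t \<ge> 1"
  shows "opt_success G d \<pi> f t = opt_success G d' \<pi>' f t"
proof -
  have "{success G \<pi> f N \<psi> Us E | N \<psi> Us E. algorithm d t N \<psi> Us E}
      = {success G \<pi>' f N \<psi> Us E | N \<psi> Us E. algorithm d' t N \<psi> Us E}"
    using success_set_subset[OF assms(1-4), of f t] success_set_subset[OF assms(1,2,4,3), of f t] assms(5)
    by (intro equalityI) auto
  thus ?thesis unfolding opt_success_def by simp
qed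

end
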